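(* Let $\{\Omega_k\}_{k\in\mathbb N_0}\subset\mathcal F$ be pairwise disjoint events with $\mathbb P(\Omega_k)=(1-e^{-1})e^{-k}$, let $X_{-1}:=0$, $X_\ell:=\sum_{k=0}^\ell e^{k/4}\mathbf 1_{\Omega_k}$ for $\ell\in\mathbb N_0$, and $X:=\sum_{k=0}^\infty e^{k/4}\mathbf 1_{\Omega_k}$. Then: $|\mathbb E[X-X_\ell]|=\Theta_\ell(e^{-3\ell/4})$ and $V_\ell=\Theta_\ell(e^{-\ell/2})$ (so Assumption A holds with $\alpha=3/4$, $\beta=1/2$); for every $x>1$, $$\lim_{\ell\to\infty}\mathbb E\Big[\frac{|\Delta_\ell X-\mathbb E[\Delta_\ell X]|^2}{V_\ell}\mathbf 1\Big\{\frac{|\Delta_\ell X-\mathbb E[\Delta_\ell X]|^2}{V_\ell}>x\Big\}\Big]=1,$$ so the sequence $\{|\Delta_\ell X-\mathbb E[\Delta_\ell X]|^2/V_\ell\}_{\ell\ge0}$ is not uniformly integrable; and nevertheless, for any costs $C_\ell=\Theta_\ell(e^{\gamma\ell})$ with $0<\gamma\le 1/2$, the normalized MLMC estimator satisfies $\frac{\mathcal A_{ML}(\epsilon)-\mathbb E[X_{L(\epsilon)}]}{\sqrt{\mathrm{Var}(\mathcal A_{ML}(\epsilon))}}\xrightarrow{d}\mathcal N(0,1)$ as $\epsilon\downarrow0$.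
   Context: $\Delta_\ell X:=X_\ell-X_{\ell-1}$, $V_\ell:=\mathrm{Var}(\Delta_\ell X)$. $f_\ell=\Theta_\ell(y_\ell)$ means there are constants $C>c>0$ with $c|y_\ell|<|f_\ell|<C|y_\ell|$ for all $\ell\in\mathbb N_0$. Assumption A: positive constants $\alpha,\beta,\gamma$ with $\min(\beta,\gamma)\le2\alpha$ and $c_\alpha>0$ such that for all $\ell\in\mathbb N_0$: $|\mathbb E[X-X_\ell]|\le c_\alpha e^{-\alpha\ell}$, $V_\ell\le Ce^{-\beta\ell}$, $C_\ell=\Theta_\ell(e^{\gamma\ell})$, where $C_\ell>0$ is the cost of sampling $\Delta_\ell X$. With $S_k:=\sum_{\ell=0}^k\sqrt{V_\ell C_\ell}$, the MLMC estimator is: $L(\epsilon):=\max(\lceil \log(c_\alpha\epsilon^{-1})/\alpha\rceil,1)$, $M_\ell(\epsilon):=\max\big(\lceil \epsilon^{-2}\sqrt{V_\ell/C_\ell}\,S_{L(\epsilon)}\rceil,1\big)$, $\mathcal A_{ML}(\epsilon):=\sum_{\ell=0}^{L(\epsilon)}\frac{1}{M_\ell(\epsilon)}\sum_{i=1}^{M_\ell(\epsilon)}\Delta_\ell X^i$, with $\{\Delta_\ell X^i\}$ mutually independent and $\Delta_\ell X^i\sim\Delta_\ell X$. *)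

theory Defs
  imports "HOL-Probability.Probability"
begin

definition Theta :: "(nat \<Rightarrow> real) \<Rightarrow> (nat \<Rightarrow> real) \<Rightarrow> bool" where
  "Theta f y \<longleftrightarrow> (\<exists>c C. 0 < c \<and> c < C \<and> (\<forall>l. c * \<bar>y l\<bar> < \<bar>f l\<bar> \<and> \<bar>f l\<bar> < C * \<bar>y l\<bar>))"

definition exX :: "(nat \<Rightarrow> 'a set) \<Rightarrow> 'a \<Rightarrow> real" where
  "exX \<Omega> \<omega> = (\<Sum>k. exp (real k / 4) * indicator (\<Omega> k) \<omega>)"

definition exXl :: "(nat \<Rightarrow> 'a set) \<Rightarrow> nat \<Rightarrow> 'a \<Rightarrow> real" where
  "exXl \<Omega> l \<omega> = (\<Sum>k=0..l. exp (real k / 4) * indicator (\<Omega> k) \<omega>)"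

definition exdX :: "(nat \<Rightarrow> 'a set) \<Rightarrow> nat \<Rightarrow> 'a \<Rightarrow> real" where
  "exdX \<Omega> l \<omega> = exXl \<Omega> l \<omega> - (if l = 0 then 0 else exXl \<Omega> (l - 1) \<omega>)"

definition unif_integrable :: "'a measure \<Rightarrow> (nat \<Rightarrow> 'a \<Rightarrow> real) \<Rightarrow> bool" where
  "unif_integrable M Y \<longleftrightarrow> (\<forall>l. integrable M (Y l)) \<and>
     (\<forall>e>0. \<exists>K. \<forall>l. (\<integral>\<omega>. \<bar>Y l \<omega>\<bar> * indicator {\<omega>\<in>space M. \<bar>Y l \<omega>\<bar> > K} \<omega> \<partial>M) < e)"

definition mlmc_L :: "real \<Rightarrow> real \<Rightarrow> real \<Rightarrow> nat" where
  "mlmc_L c\<alpha> \<alpha> \<epsilon> = nat (max (\<lceil>ln (c\<alpha> / \<epsilon>) / \<alpha>\<rceil>) 1)"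

definition mlmc_S :: "(nat \<Rightarrow> real) \<Rightarrow> (nat \<Rightarrow> real) \<Rightarrow> nat \<Rightarrow> real" where
  "mlmc_S V C k = (\<Sum>l=0..k. sqrt (V l * C l))"

definition mlmc_M :: "(nat \<Rightarrow> real) \<Rightarrow> (nat \<Rightarrow> real) \<Rightarrow> real \<Rightarrow> real \<Rightarrow> real \<Rightarrow> nat \<Rightarrow> nat" where
  "mlmc_M V C c\<alpha> \<alpha> \<epsilon> l =
     nat (max (\<lceil>(1 / \<epsilon>\<^sup>2) * sqrt (V l / C l) * mlmc_S V C (mlmc_L c\<alpha> \<alpha> \<epsilon>)\<rceil>) 1)"

definition mlmc_est :: "(nat \<Rightarrow> real) \<Rightarrow> (nat \<Rightarrow> real) \<Rightarrow> real \<Rightarrow> real \<Rightarrow> real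
     \<Rightarrow> (nat \<Rightarrow> nat \<Rightarrow> 'b \<Rightarrow> real) \<Rightarrow> 'b \<Rightarrow> real" where
  "mlmc_est V C c\<alpha> \<alpha> \<epsilon> D \<omega> =
     (\<Sum>l=0..mlmc_L c\<alpha> \<alpha> \<epsilon>. (1 / real (mlmc_M V C c\<alpha> \<alpha> \<epsilon> l)) *
        (\<Sum>i=1..mlmc_M V C c\<alpha> \<alpha> \<epsilon> l. D l i \<omega>))"

definition conv_distr_at_0 :: "'b measure \<Rightarrow> (real \<Rightarrow> 'b \<Rightarrow> real) \<Rightarrow> bool" where
  "conv_distr_at_0 N Z \<longleftrightarrow> (\<forall>\<epsilon>s. (\<forall>n. \<epsilon>s n > 0) \<longrightarrow> \<epsilon>s \<longlonglongrightarrow> 0 \<longrightarrow>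
      weak_conv_m (\<lambda>n. distr N borel (Z (\<epsilon>s n))) std_normal_distribution)"

end

theory Submission
  imports Defs
begin

text \<open>\<open>\<Delta>\<^sub>\<ell>X = e\<^sup>\<ell>\<^sup>/\<^sup>4 \<one>\<^sub>\<Omega>\<^sub>\<ell>\<close> is a scaled Bernoulli variable with success probability
  \<open>p\<^sub>\<ell> \<asymp> e\<^sup>-\<^sup>\<ell>\<close>, so the bias and the level variances are explicit geometric quantities. Its
  standardized square equals \<open>(1 - p\<^sub>\<ell>)/p\<^sub>\<ell>\<close> on \<open>\<Omega>\<^sub>\<ell>\<close> and is small elsewhere, so it carries mass
  \<open>1 - p\<^sub>\<ell> \<rightarrow> 1\<close> beyond any fixed level, and uniform integrability fails.
  The MLMC estimator is nevertheless a sum of independent, centred, bounded samples: a level-\<open>\<ell>\<close>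
  sample deviates by at most \<open>e\<^sup>\<ell>\<^sup>/\<^sup>4/M\<^sub>\<ell>\<close>, and for \<open>\<gamma> \<le> 1/2\<close> this is \<open>O(L\<^sup>-\<^sup>1\<^sup>/\<^sup>2)\<close> times the standard
  deviation of the estimator. A central limit theorem for triangular arrays with uniformly
  vanishing bounds, proved through characteristic functions, then gives asymptotic normality.\<close>

section \<open>A central limit theorem for bounded triangular arrays\<close>

lemma exp_minus_second_order_bound:
  fixes c :: real assumes "0 \<le> c"
  shows "\<bar>exp (-c) - (1 - c)\<bar> \<le> c^2 / 2"
proof -
  have lower: "1 - c \<le> exp (-c)" using exp_ge_add_one_self[of "-c"] by simp
  have taylor: "1 + c + c^2/2 \<le> exp c" using exp_lower_Taylor_quadratic[OF assms] .
  have pos: "0 < 1 + c + c^2/2" using assms by (simp add: add_pos_nonneg)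
  have "exp (-c) = 1 / exp c" by (simp add: exp_minus field_simps)
  also have "\<dots> \<le> 1 / (1 + c + c^2/2)" using taylor pos by (simp add: frac_le)
  also have "\<dots> \<le> 1 - c + c^2/2"
  proof -
    have "(1 - c + c^2/2) * (1 + c + c^2/2) = 1 + c^4/4"
      by (simp add: algebra_simps power2_eq_square power4_eq_xxxx)
    thus ?thesis using pos by (simp add: divide_le_eq)
  qed
  finally show ?thesis using lower by simp
qed

lemma (in prob_space) char_bounded_centered_approx:
  fixes Y :: "'a \<Rightarrow> real"
  assumes [measurable]: "Y \<in> borel_measurable M"
    and sq_int: "integrable M (\<lambda>\<omega>. (Y \<omega>)\<^sup>2)" and centered: "expectation Y = 0"
    and bounded: "AE \<omega> in M. \<bar>Y \<omega>\<bar> \<le> b"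
  shows "cmod (char (distr M borel Y) t - (1 - t^2 * expectation (\<lambda>\<omega>. (Y \<omega>)\<^sup>2) / 2))
           \<le> \<bar>t\<bar>^3 * b * expectation (\<lambda>\<omega>. (Y \<omega>)\<^sup>2) / 6"
proof -
  have int: "integrable M Y" by (rule square_integrable_imp_integrable) (use sq_int in auto)
  have b: "0 \<le> b"
  proof -
    have "AE \<omega> in M. 0 \<le> b" using bounded by eventually_elim (auto intro: order_trans[OF abs_ge_zero])
    thus ?thesis by simp
  qed
  have "cmod (char (distr M borel Y) t - (1 - t^2 * expectation (\<lambda>\<omega>. (Y \<omega>)\<^sup>2) / 2))
      \<le> (t^2 / 6) * expectation (\<lambda>\<omega>. min (6 * (Y \<omega>)^2) (\<bar>t\<bar> * \<bar>Y \<omega>\<bar>^3))"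
    by (rule char_approx3') (use int sq_int centered in auto)
  also have "\<dots> \<le> (t^2 / 6) * expectation (\<lambda>\<omega>. \<bar>t\<bar> * b * (Y \<omega>)^2)"
  proof (intro mult_left_mono integral_mono_AE)
    show "integrable M (\<lambda>\<omega>. min (6 * (Y \<omega>)\<^sup>2) (\<bar>t\<bar> * \<bar>Y \<omega>\<bar> ^ 3))"
      by (rule Bochner_Integration.integrable_bound[where f="\<lambda>\<omega>. 6 * (Y \<omega>)^2"]) (use sq_int in auto)
    show "AE \<omega> in M. min (6 * (Y \<omega>)\<^sup>2) (\<bar>t\<bar> * \<bar>Y \<omega>\<bar> ^ 3) \<le> \<bar>t\<bar> * b * (Y \<omega>)\<^sup>2"
      using bounded
    proof eventually_elim
      case (elim \<omega>)
      have "\<bar>t\<bar> * \<bar>Y \<omega>\<bar> ^ 3 = \<bar>t\<bar> * \<bar>Y \<omega>\<bar> * (Y \<omega>)\<^sup>2"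
        by (simp add: power3_eq_cube power2_eq_square abs_mult_self_eq)
      also have "\<dots> \<le> \<bar>t\<bar> * b * (Y \<omega>)\<^sup>2"
        using elim by (intro mult_right_mono mult_left_mono) auto
      finally show ?case by simp
    qed
  qed (use sq_int in auto)
  also have "\<dots> = \<bar>t\<bar>^3 * b * expectation (\<lambda>\<omega>. (Y \<omega>)\<^sup>2) / 6"
    by (simp add: power2_eq_square power3_eq_cube abs_mult_self_eq)
  finally show ?thesis .
qed

text \<open>Lindeberg's product comparison: the characteristic function of the sum is the product of
  those of the summands, each within \<open>|t|\<^sup>3 b \<sigma>\<^sub>j\<^sup>2/6\<close> of \<open>1 - t\<^sup>2\<sigma>\<^sub>j\<^sup>2/2\<close>, which in turn is within
  \<open>\<sigma>\<^sub>j\<^sup>2 t\<^sup>4b\<^sup>2/8\<close> of \<open>exp (-t\<^sup>2\<sigma>\<^sub>j\<^sup>2/2)\<close>.\<close>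
lemma (in prob_space) char_sum_indep_bounded_approx:
  fixes Y :: "'i \<Rightarrow> 'a \<Rightarrow> real"
  assumes fin: "finite I" and indep: "indep_vars (\<lambda>_. borel) Y I"
    and sq_int: "\<And>j. j \<in> I \<Longrightarrow> integrable M (\<lambda>\<omega>. (Y j \<omega>)\<^sup>2)"
    and centered: "\<And>j. j \<in> I \<Longrightarrow> expectation (Y j) = 0"
    and unit_var: "(\<Sum>j\<in>I. expectation (\<lambda>\<omega>. (Y j \<omega>)\<^sup>2)) = 1"
    and bounded: "\<And>j. j \<in> I \<Longrightarrow> AE \<omega> in M. \<bar>Y j \<omega>\<bar> \<le> b"
    and small: "t^2 * b^2 \<le> 2"
  shows "cmod (char (distr M borel (\<lambda>\<omega>. \<Sum>j\<in>I. Y j \<omega>)) t - exp (-(t^2)/2))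
           \<le> \<bar>t\<bar>^3 * \<bar>b\<bar> / 6 + t^4 * b^2 / 8"
proof -
  have [measurable]: "j \<in> I \<Longrightarrow> Y j \<in> borel_measurable M" for j
    using indep unfolding indep_vars_def2 by auto
  define \<sigma> where "\<sigma> j = expectation (\<lambda>\<omega>. (Y j \<omega>)\<^sup>2)" for j
  define \<psi> where "\<psi> j = char (distr M borel (Y j)) t" for j
  define c where "c j = t^2 * \<sigma> j / 2" for j
  have c_nonneg: "0 \<le> c j" for j unfolding c_def \<sigma>_def by simp
  have c_sum: "(\<Sum>j\<in>I. c j) = t^2/2"
    unfolding c_def using unit_var by (simp add: \<sigma>_def sum_divide_distrib[symmetric] sum_distrib_left[symmetric])
  have b: "0 \<le> b" if "j \<in> I" for j
  proof -
    have "AE \<omega> in M. 0 \<le> b" using bounded[OF that] by eventually_elim (auto intro: order_trans[OF abs_ge_zero])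
    thus ?thesis by simp
  qed
  have \<sigma>_le: "\<sigma> j \<le> b^2" if "j \<in> I" for j
  proof -
    have "expectation (\<lambda>\<omega>. (Y j \<omega>)\<^sup>2) \<le> expectation (\<lambda>\<omega>. b^2)"
      by (rule integral_mono_AE)
         (use sq_int that bounded[OF that] b[OF that] in \<open>auto elim!: eventually_mono simp flip: abs_le_square_iff\<close>)
    thus ?thesis by (simp add: \<sigma>_def prob_space)
  qed
  have c_le: "c j \<le> t^2 * b^2 / 2" if "j \<in> I" for j
    unfolding c_def using \<sigma>_le[OF that] by (simp add: mult_left_mono divide_right_mono)
  have factor: "cmod (\<psi> j - complex_of_real (1 - c j)) \<le> \<bar>t\<bar>^3 * b * \<sigma> j / 6" if "j \<in> I" for j
    using char_bounded_centered_approx[OF _ sq_int centered bounded, of j t] that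
    by (simp add: \<psi>_def c_def \<sigma>_def)
  have exp_factor: "cmod (complex_of_real (1 - c j) - complex_of_real (exp (- c j))) \<le> c j * (t^2 * b^2 / 4)"
    if "j \<in> I" for j
  proof -
    have "\<bar>exp (- c j) - (1 - c j)\<bar> \<le> c j * c j / 2"
      using exp_minus_second_order_bound[OF c_nonneg] by (simp add: power2_eq_square)
    also have "\<dots> \<le> c j * (t^2 * b^2 / 2) / 2"
      using c_le[OF that] c_nonneg[of j] by (intro divide_right_mono mult_left_mono) auto
    finally show ?thesis by (simp del: of_real_diff add: of_real_diff[symmetric] abs_minus_commute)
  qed
  have norm_\<psi>: "cmod (\<psi> j) \<le> 1" if "j \<in> I" for j
    unfolding \<psi>_def by (rule real_distribution.cmod_char_le_1) (use that in auto)
  have norm_lin: "cmod (complex_of_real (1 - c j)) \<le> 1" if "j \<in> I" for j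
    using c_le[OF that] small c_nonneg[of j] by (simp only: norm_of_real abs_le_iff) simp
  have norm_exp: "cmod (complex_of_real (exp (- c j))) \<le> 1" for j
    using c_nonneg[of j] by simp
  have exp_prod: "(\<Prod>j\<in>I. complex_of_real (exp (- c j))) = exp (-(t^2)/2)"
  proof -
    have "(\<Prod>j\<in>I. exp (- c j)) = exp (-(t^2)/2)"
      using fin c_sum by (simp add: exp_sum[symmetric] sum_negf)
    thus ?thesis by (simp flip: of_real_prod)
  qed
  have "cmod (char (distr M borel (\<lambda>\<omega>. \<Sum>j\<in>I. Y j \<omega>)) t - exp (-(t^2)/2))
      \<le> cmod ((\<Prod>j\<in>I. \<psi> j) - (\<Prod>j\<in>I. complex_of_real (1 - c j)))
        + cmod ((\<Prod>j\<in>I. complex_of_real (1 - c j)) - (\<Prod>j\<in>I. complex_of_real (exp (- c j))))"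
    unfolding char_distr_sum[OF indep] \<psi>_def[symmetric] exp_prod[symmetric]
    by (metis norm_triangle_ineq diff_add_cancel add_diff_eq)
  also have "\<dots> \<le> (\<Sum>j\<in>I. \<bar>t\<bar>^3 * b * \<sigma> j / 6) + (\<Sum>j\<in>I. c j * (t^2 * b^2 / 4))"
  proof (rule add_mono)
    show "cmod ((\<Prod>j\<in>I. \<psi> j) - (\<Prod>j\<in>I. complex_of_real (1 - c j))) \<le> (\<Sum>j\<in>I. \<bar>t\<bar>^3 * b * \<sigma> j / 6)"
      by (rule order_trans[OF norm_prod_diff sum_mono]) (use norm_\<psi> norm_lin factor in auto)
    show "cmod ((\<Prod>j\<in>I. complex_of_real (1 - c j)) - (\<Prod>j\<in>I. complex_of_real (exp (- c j))))
        \<le> (\<Sum>j\<in>I. c j * (t^2 * b^2 / 4))"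
      by (rule order_trans[OF norm_prod_diff sum_mono]) (use norm_lin norm_exp exp_factor in auto)
  qed
  also have "\<dots> = \<bar>t\<bar>^3 * b / 6 * (\<Sum>j\<in>I. \<sigma> j) + (\<Sum>j\<in>I. c j) * (t^2 * b^2 / 4)"
    by (simp add: sum_distrib_left sum_distrib_right sum_divide_distrib)
  also have "\<dots> = \<bar>t\<bar>^3 * b / 6 + t^4 * b^2 / 8"
    using unit_var c_sum by (simp add: \<sigma>_def power4_eq_xxxx power2_eq_square)
  also have "\<dots> \<le> \<bar>t\<bar>^3 * \<bar>b\<bar> / 6 + t^4 * b^2 / 8"
    by (simp add: divide_right_mono mult_left_mono)
  finally show ?thesis .
qed

lemma clt_bounded_triangular_array:
  fixes N :: "'b measure" and I :: "nat \<Rightarrow> 'i set" and Y :: "nat \<Rightarrow> 'i \<Rightarrow> 'b \<Rightarrow> real"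
  assumes "prob_space N"
    and fin: "\<And>n. finite (I n)"
    and indep: "\<And>n. prob_space.indep_vars N (\<lambda>_. borel) (Y n) (I n)"
    and sq_int: "\<And>n j. j \<in> I n \<Longrightarrow> integrable N (\<lambda>\<omega>. (Y n j \<omega>)\<^sup>2)"
    and centered: "\<And>n j. j \<in> I n \<Longrightarrow> integral\<^sup>L N (Y n j) = 0"
    and unit_var: "\<And>n. (\<Sum>j\<in>I n. integral\<^sup>L N (\<lambda>\<omega>. (Y n j \<omega>)\<^sup>2)) = 1"
    and bounded: "eventually (\<lambda>n. \<forall>j\<in>I n. AE \<omega> in N. \<bar>Y n j \<omega>\<bar> \<le> b n) sequentially"
    and b_lim: "b \<longlonglongrightarrow> 0"
  shows "weak_conv_m (\<lambda>n. distr N borel (\<lambda>\<omega>. \<Sum>j\<in>I n. Y n j \<omega>)) std_normal_distribution"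
proof -
  interpret prob_space N by fact
  show ?thesis
  proof (rule levy_continuity)
    fix t :: real
    have "(\<lambda>n. t^2 * (b n)^2) \<longlonglongrightarrow> t^2 * 0^2" by (intro tendsto_intros b_lim)
    hence "eventually (\<lambda>n. t^2 * (b n)^2 < 2) sequentially"
      by (intro order_tendstoD(2)) auto
    with bounded have close: "eventually (\<lambda>n.
        cmod (char (distr N borel (\<lambda>\<omega>. \<Sum>j\<in>I n. Y n j \<omega>)) t - exp (-(t^2)/2))
          \<le> \<bar>t\<bar>^3 * \<bar>b n\<bar> / 6 + t^4 * (b n)^2 / 8) sequentially"
      by eventually_elim
         (rule char_sum_indep_bounded_approx[OF fin indep sq_int centered unit_var]; auto)
    have "(\<lambda>n. \<bar>t\<bar>^3 * \<bar>b n\<bar> / 6 + t^4 * (b n)^2 / 8) \<longlonglongrightarrow> \<bar>t\<bar>^3 * \<bar>0\<bar> / 6 + t^4 * 0^2 / 8"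
      by (intro tendsto_intros b_lim) auto
    hence "(\<lambda>n. char (distr N borel (\<lambda>\<omega>. \<Sum>j\<in>I n. Y n j \<omega>)) t - exp (-(t^2)/2)) \<longlonglongrightarrow> 0"
      by (intro Lim_null_comparison[OF close]) simp
    thus "(\<lambda>n. char (distr N borel (\<lambda>\<omega>. \<Sum>j\<in>I n. Y n j \<omega>)) t) \<longlonglongrightarrow> char std_normal_distribution t"
      unfolding char_std_normal_distribution by (simp add: LIM_zero_iff)
  next
    fix n
    have [measurable]: "j \<in> I n \<Longrightarrow> Y n j \<in> borel_measurable N" for j
      using indep[of n] unfolding indep_vars_def2 by auto
    show "real_distribution (distr N borel (\<lambda>\<omega>. \<Sum>j\<in>I n. Y n j \<omega>))"
      by (intro real_distribution_distr) auto
  qed (rule real_dist_normal_dist)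
qed

lemma (in prob_space) variance_sum_indep_centered:
  fixes X :: "'i \<Rightarrow> 'a \<Rightarrow> real"
  assumes "finite I" "indep_vars (\<lambda>_. borel) X I"
    "\<And>i. i \<in> I \<Longrightarrow> integrable M (\<lambda>\<omega>. (X i \<omega>)\<^sup>2)" "\<And>i. i \<in> I \<Longrightarrow> expectation (X i) = 0"
  shows "expectation (\<lambda>\<omega>. (\<Sum>i\<in>I. X i \<omega>)\<^sup>2) = (\<Sum>i\<in>I. expectation (\<lambda>\<omega>. (X i \<omega>)\<^sup>2))"
    and "integrable M (\<lambda>\<omega>. (\<Sum>i\<in>I. X i \<omega>)\<^sup>2)"
proof -
  have "integrable M (\<lambda>\<omega>. (\<Sum>i\<in>I. X i \<omega>)\<^sup>2) \<and>
         expectation (\<lambda>\<omega>. (\<Sum>i\<in>I. X i \<omega>)\<^sup>2) = (\<Sum>i\<in>I. expectation (\<lambda>\<omega>. (X i \<omega>)\<^sup>2))"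
    using assms
  proof (induction I rule: finite_induct)
    case (insert x F)
    have IH: "integrable M (\<lambda>\<omega>. (\<Sum>i\<in>F. X i \<omega>)\<^sup>2)"
       "expectation (\<lambda>\<omega>. (\<Sum>i\<in>F. X i \<omega>)\<^sup>2) = (\<Sum>i\<in>F. expectation (\<lambda>\<omega>. (X i \<omega>)\<^sup>2))"
      using insert.IH[OF indep_vars_subset[OF insert.prems(1)]] insert.prems by auto
    have [measurable]: "i \<in> insert x F \<Longrightarrow> X i \<in> borel_measurable M" for i
      using insert.prems(1) unfolding indep_vars_def2 by auto
    have int: "i \<in> insert x F \<Longrightarrow> integrable M (X i)" for i
      by (rule square_integrable_imp_integrable) (use insert.prems(2) in auto)
    have int_sum: "integrable M (\<lambda>\<omega>. \<Sum>i\<in>F. X i \<omega>)" using int by auto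
    have "indep_var borel (X x) borel (\<lambda>\<omega>. \<Sum>i\<in>F. X i \<omega>)"
      by (rule indep_vars_sum[OF insert.hyps(1,2) insert.prems(1)])
    \<comment> \<open>the cross term vanishes by independence\<close>
    note cross = indep_var_integrable[OF this int int_sum] indep_var_lebesgue_integral[OF this int int_sum]
    have "expectation (\<lambda>\<omega>. \<Sum>i\<in>F. X i \<omega>) = 0"
      using int insert.prems(3) by (simp add: Bochner_Integration.integral_sum)
    moreover have "(\<lambda>\<omega>. (\<Sum>i\<in>insert x F. X i \<omega>)\<^sup>2) =
       (\<lambda>\<omega>. ((X x \<omega>)\<^sup>2 + 2 * (X x \<omega> * (\<Sum>i\<in>F. X i \<omega>))) + (\<Sum>i\<in>F. X i \<omega>)\<^sup>2)"
      using insert.hyps by (simp add: power2_eq_square algebra_simps)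
    ultimately show ?case
      using insert.prems(2) cross IH insert.hyps by (simp add: Bochner_Integration.integral_add)
  qed simp
  thus "expectation (\<lambda>\<omega>. (\<Sum>i\<in>I. X i \<omega>)\<^sup>2) = (\<Sum>i\<in>I. expectation (\<lambda>\<omega>. (X i \<omega>)\<^sup>2))"
    and "integrable M (\<lambda>\<omega>. (\<Sum>i\<in>I. X i \<omega>)\<^sup>2)" by auto
qed

section \<open>The MLMC parameters\<close>

definition mlmc_var :: "(nat \<Rightarrow> real) \<Rightarrow> (nat \<Rightarrow> real) \<Rightarrow> real \<Rightarrow> real \<Rightarrow> real \<Rightarrow> real" where
  "mlmc_var V C c\<alpha> \<alpha> \<epsilon> = (\<Sum>l=0..mlmc_L c\<alpha> \<alpha> \<epsilon>. V l / real (mlmc_M V C c\<alpha> \<alpha> \<epsilon> l))"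

lemma mlmc_L_ge: "ln (c\<alpha> / \<epsilon>) / \<alpha> \<le> real (mlmc_L c\<alpha> \<alpha> \<epsilon>)"
  unfolding mlmc_L_def by linarith

lemma mlmc_L_tolerance:
  assumes "0 < \<alpha>" "0 < \<epsilon>" "\<epsilon> \<le> c\<alpha>"
  shows "\<epsilon> \<le> c\<alpha> * exp (- \<alpha> * (real (mlmc_L c\<alpha> \<alpha> \<epsilon>) - 1))"
proof -
  have "0 \<le> ln (c\<alpha> / \<epsilon>) / \<alpha>" using assms by simp
  hence "real (mlmc_L c\<alpha> \<alpha> \<epsilon>) \<le> ln (c\<alpha> / \<epsilon>) / \<alpha> + 1"
    unfolding mlmc_L_def using of_int_ceiling_le_add_one[of "ln (c\<alpha> / \<epsilon>) / \<alpha>"]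
    by (simp add: max_def)
  hence "\<alpha> * (real (mlmc_L c\<alpha> \<alpha> \<epsilon>) - 1) \<le> ln (c\<alpha> / \<epsilon>)"
    using \<open>0 < \<alpha>\<close> by (simp add: field_simps)
  hence "exp (\<alpha> * (real (mlmc_L c\<alpha> \<alpha> \<epsilon>) - 1)) \<le> c\<alpha> / \<epsilon>"
    using assms by (metis divide_pos_pos exp_le_cancel_iff exp_ln order_less_le_trans)
  thus ?thesis using assms by (simp only: mult_minus_left exp_minus) (simp add: field_simps)
qed

lemma mlmc_M_ge_1: "1 \<le> real (mlmc_M V C c\<alpha> \<alpha> \<epsilon> l)"
  unfolding mlmc_M_def by simp

lemma mlmc_M_ge: "(1 / \<epsilon>\<^sup>2) * sqrt (V l / C l) * mlmc_S V C (mlmc_L c\<alpha> \<alpha> \<epsilon>) \<le> real (mlmc_M V C c\<alpha> \<alpha> \<epsilon> l)"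
  unfolding mlmc_M_def by linarith

lemma mlmc_M_le_double:
  assumes "1 \<le> (1 / \<epsilon>\<^sup>2) * sqrt (V l / C l) * mlmc_S V C (mlmc_L c\<alpha> \<alpha> \<epsilon>)"
  shows "real (mlmc_M V C c\<alpha> \<alpha> \<epsilon> l) \<le> 2 * ((1 / \<epsilon>\<^sup>2) * sqrt (V l / C l) * mlmc_S V C (mlmc_L c\<alpha> \<alpha> \<epsilon>))"
  using assms unfolding mlmc_M_def by linarith

lemma mlmc_S_pos:
  assumes "\<And>l. 0 < V l" "\<And>l. 0 < C l"
  shows "sqrt (V 0 * C 0) \<le> mlmc_S V C L" and "0 < mlmc_S V C L"
proof -
  show S0: "sqrt (V 0 * C 0) \<le> mlmc_S V C L"
    unfolding mlmc_S_def
    by (rule member_le_sum[of 0 "{0..L}" "\<lambda>k. sqrt (V k * C k)"]) (auto simp: assms less_imp_le)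
  show "0 < mlmc_S V C L"
    using assms[of 0] by (intro less_le_trans[OF _ S0]) simp
qed

lemma sqrt_exp: "sqrt (exp x) = exp (x / 2)"
  by (rule real_sqrt_unique) (simp_all add: power2_eq_square exp_add[symmetric])

lemma mlmc_S_lower:
  assumes v0: "0 < v0" and V_lower: "\<And>l. v0 * exp (- \<beta> * real l) \<le> V l"
    and c1: "0 < c1" and C_lower: "\<And>l. c1 * exp (\<gamma> * real l) \<le> C l" and "\<gamma> \<le> \<beta>"
  shows "(real L + 1) * sqrt (v0 * c1) * exp ((\<gamma> - \<beta>) / 2 * real L) \<le> mlmc_S V C L"
proof -
  have "(real L + 1) * sqrt (v0 * c1) * exp ((\<gamma> - \<beta>) / 2 * real L)
      = (\<Sum>k=0..L. sqrt (v0 * c1) * exp ((\<gamma> - \<beta>) / 2 * real L))"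
    by simp
  also have "\<dots> \<le> (\<Sum>k=0..L. sqrt (V k * C k))"
  proof (rule sum_mono)
    fix k assume k: "k \<in> {0..L}"
    have "(\<gamma> - \<beta>) / 2 * real L \<le> (\<gamma> - \<beta>) / 2 * real k"
      using k \<open>\<gamma> \<le> \<beta>\<close> by (intro mult_left_mono_neg) auto
    hence "sqrt (v0 * c1) * exp ((\<gamma> - \<beta>) / 2 * real L) \<le> sqrt (v0 * c1) * exp ((\<gamma> - \<beta>) / 2 * real k)"
      using v0 c1 by (intro mult_left_mono) auto
    also have "\<dots> = sqrt ((v0 * exp (- \<beta> * real k)) * (c1 * exp (\<gamma> * real k)))"
      by (simp add: real_sqrt_mult sqrt_exp exp_add[symmetric] mult_ac field_simps)
    also have "\<dots> \<le> sqrt (V k * C k)"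
      using V_lower[of k] C_lower[of k] v0 c1 order_trans[OF _ V_lower[of k]]
      by (intro real_sqrt_le_mono mult_mono) auto
    finally show "sqrt (v0 * c1) * exp ((\<gamma> - \<beta>) / 2 * real L) \<le> sqrt (V k * C k)" .
  qed
  finally show ?thesis unfolding mlmc_S_def .
qed

lemma mlmc_var_lower:
  assumes V: "\<And>l. 0 < V l" and C: "\<And>l. 0 < C l" and \<epsilon>: "0 < \<epsilon>" "\<epsilon>\<^sup>2 \<le> V 0"
  shows "\<epsilon>\<^sup>2 * sqrt (V 0 * C 0) / (2 * mlmc_S V C (mlmc_L c\<alpha> \<alpha> \<epsilon>)) \<le> mlmc_var V C c\<alpha> \<alpha> \<epsilon>"
proof -
  define S where "S = mlmc_S V C (mlmc_L c\<alpha> \<alpha> \<epsilon>)"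
  define x where "x = (1 / \<epsilon>\<^sup>2) * sqrt (V 0 / C 0) * S"
  have S: "sqrt (V 0 * C 0) \<le> S" "0 < S" unfolding S_def using mlmc_S_pos[OF V C] by auto
  have root_identity: "sqrt (V 0 / C 0) * sqrt (V 0 * C 0) = V 0"
    using V[of 0] C[of 0] by (simp add: real_sqrt_mult[symmetric] power2_eq_square[symmetric])
  have "V 0 / \<epsilon>\<^sup>2 \<le> x"
  proof -
    have "V 0 \<le> sqrt (V 0 / C 0) * S"
      using root_identity S V[of 0] C[of 0] by (metis mult_left_mono real_sqrt_ge_zero less_imp_le divide_nonneg_nonneg)
    thus ?thesis unfolding x_def using \<epsilon> by (simp add: divide_right_mono)
  qed
  moreover have "1 \<le> V 0 / \<epsilon>\<^sup>2" using \<epsilon> by simp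
  ultimately have x: "1 \<le> x" by linarith
  have "\<epsilon>\<^sup>2 * sqrt (V 0 * C 0) / (2 * S) = V 0 / (2 * x)"
    unfolding x_def using \<epsilon> S V[of 0] C[of 0] root_identity by (simp add: field_simps)
  also have "\<dots> \<le> V 0 / real (mlmc_M V C c\<alpha> \<alpha> \<epsilon> 0)"
  proof (rule divide_left_mono)
    show "real (mlmc_M V C c\<alpha> \<alpha> \<epsilon> 0) \<le> 2 * x"
      using mlmc_M_le_double[of \<epsilon> V 0 C] x unfolding x_def S_def by simp
    show "0 < 2 * x * real (mlmc_M V C c\<alpha> \<alpha> \<epsilon> 0)"
      using mlmc_M_ge_1[of V C c\<alpha> \<alpha> \<epsilon> 0] x by simp
  qed (use V[of 0] in simp)
  also have "\<dots> \<le> mlmc_var V C c\<alpha> \<alpha> \<epsilon>" unfolding mlmc_var_def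
    by (rule member_le_sum[of 0 _ "\<lambda>k. V k / real (mlmc_M V C c\<alpha> \<alpha> \<epsilon> k)"])
       (auto intro: divide_nonneg_nonneg less_imp_le[OF V])
  finally show ?thesis unfolding S_def .
qed

lemma mlmc_tolerance_growth_bound:
  assumes \<epsilon>: "0 < \<epsilon>" "\<epsilon> \<le> c\<alpha>" and "\<gamma> \<le> 1/2"
  shows "\<epsilon>\<^sup>2 * exp ((5/4 + \<gamma>/2) * real (mlmc_L c\<alpha> (3/4) \<epsilon>)) \<le> c\<alpha>\<^sup>2 * exp (3/2)"
proof -
  define L where "L = mlmc_L c\<alpha> (3/4) \<epsilon>"
  have "\<epsilon>\<^sup>2 \<le> (c\<alpha> * exp (- 3/4 * (real L - 1)))\<^sup>2"
    using mlmc_L_tolerance[of "3/4" \<epsilon> c\<alpha>] \<epsilon> by (intro power_mono) (auto simp: L_def)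
  also have "\<dots> = c\<alpha>\<^sup>2 * exp (3/2) * exp (- 3/2 * real L)"
    by (simp add: power_mult_distrib exp_add[symmetric] power2_eq_square algebra_simps)
  finally have "\<epsilon>\<^sup>2 * exp ((5/4 + \<gamma>/2) * real L)
      \<le> c\<alpha>\<^sup>2 * exp (3/2) * exp (- 3/2 * real L) * exp ((5/4 + \<gamma>/2) * real L)"
    by (intro mult_right_mono) auto
  also have "\<dots> = c\<alpha>\<^sup>2 * exp (3/2) * exp ((\<gamma>/2 - 1/4) * real L)"
    by (simp add: exp_add[symmetric] algebra_simps)
  also have "\<dots> \<le> c\<alpha>\<^sup>2 * exp (3/2)"
    using \<open>\<gamma> \<le> 1/2\<close> by (intro mult_left_le) (auto intro!: mult_nonpos_nonneg)
  finally show ?thesis unfolding L_def .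
qed

text \<open>The squared range \<open>exp (l/2)\<close> of a level-\<open>l\<close> sample, divided by \<open>M\<^sub>l\<^sup>2\<close> and by the estimator
  variance, is \<open>O(1/L)\<close>; for \<open>\<gamma> \<le> 1/2\<close> the powers of \<open>e\<close> cancel against \<open>\<epsilon>\<^sup>2 \<approx> e\<^sup>-\<^sup>3\<^sup>L\<^sup>/\<^sup>2\<close>,
  and the factor \<open>L + 1\<close> comes from the \<open>L + 1\<close> comparable terms of \<open>S\<^sub>L\<close>.\<close>
lemma mlmc_level_weight_bound:
  fixes V C :: "nat \<Rightarrow> real"
  assumes v0: "0 < v0" and V_lower: "\<And>l. v0 * exp (- (1/2) * real l) \<le> V l"
    and c1: "0 < c1" and C_lower: "\<And>l. c1 * exp (\<gamma> * real l) \<le> C l"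
    and C_upper: "\<And>l. C l \<le> C1 * exp (\<gamma> * real l)" and \<gamma>: "0 \<le> \<gamma>" "\<gamma> \<le> 1/2"
    and c\<alpha>: "0 < c\<alpha>" and \<epsilon>: "0 < \<epsilon>" "\<epsilon> \<le> c\<alpha>" "\<epsilon>\<^sup>2 \<le> V 0"
    and l: "l \<le> mlmc_L c\<alpha> (3/4) \<epsilon>"
  shows "exp (real l / 2) / ((real (mlmc_M V C c\<alpha> (3/4) \<epsilon> l))\<^sup>2 * mlmc_var V C c\<alpha> (3/4) \<epsilon>)
     \<le> 2 * C1 * c\<alpha>\<^sup>2 * exp (3/2) / (v0 * sqrt (v0 * c1) * sqrt (V 0 * C 0))
         / (real (mlmc_L c\<alpha> (3/4) \<epsilon>) + 1)"
proof -
  define L where "L = mlmc_L c\<alpha> (3/4) \<epsilon>"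
  define S where "S = mlmc_S V C L"
  define x where "x = (1 / \<epsilon>\<^sup>2) * sqrt (V l / C l) * S"
  define R where "R = sqrt (V 0 * C 0)"
  define K where "K = 2 * C1 / (v0 * sqrt (v0 * c1) * R)"
  have V: "0 < V k" for k using V_lower[of k] v0 by (smt (verit) exp_gt_zero mult_pos_pos)
  have C: "0 < C k" for k using C_lower[of k] c1 by (smt (verit) exp_gt_zero mult_pos_pos)
  have C1: "0 < C1" using C[of 0] C_upper[of 0] by (smt (verit) exp_gt_zero mult_nonpos_nonneg)
  have R: "0 < R" unfolding R_def using V C by simp
  have S: "0 < S" unfolding S_def using mlmc_S_pos[OF V C] by auto
  have x: "0 < x" unfolding x_def using \<epsilon> S V[of l] C[of l] by simp
  have S_lower: "(real L + 1) * sqrt (v0 * c1) * exp ((\<gamma> - 1/2) / 2 * real L) \<le> S"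
    unfolding S_def by (rule mlmc_S_lower[OF v0 V_lower c1 C_lower \<gamma>(2)])
  have ratio: "exp (real l / 2) * C l / V l \<le> C1 / v0 * exp ((1 + \<gamma>) * real L)"
  proof -
    have "exp (real l / 2) * C l / V l \<le> exp (real l / 2) * (C1 * exp (\<gamma> * real l)) / (v0 * exp (- (1/2) * real l))"
      using C_upper[of l] V_lower[of l] C[of l] v0 by (intro frac_le mult_left_mono) auto
    also have "\<dots> = C1 / v0 * exp ((1 + \<gamma>) * real l)"
      using v0 by (simp add: exp_minus field_simps exp_add[symmetric] distrib_right)
    also have "\<dots> \<le> C1 / v0 * exp ((1 + \<gamma>) * real L)"
      using l C1 v0 \<gamma> by (intro mult_left_mono) (auto simp: L_def intro!: mult_left_mono)
    finally show ?thesis .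
  qed
  define s0 where "s0 = \<epsilon>\<^sup>2 * R / (2 * S)"
  have s0: "0 < s0" unfolding s0_def using \<epsilon> R S by simp
  have M: "x \<le> real (mlmc_M V C c\<alpha> (3/4) \<epsilon> l)"
    using mlmc_M_ge[of \<epsilon> V l C c\<alpha> "3/4"] by (simp add: x_def S_def L_def)
  have var: "s0 \<le> mlmc_var V C c\<alpha> (3/4) \<epsilon>"
    using mlmc_var_lower[where V=V and C=C and c\<alpha>=c\<alpha> and \<alpha>="3/4", OF V C \<epsilon>(1,3)]
    by (simp add: s0_def S_def L_def R_def)
  have "exp (real l / 2) / ((real (mlmc_M V C c\<alpha> (3/4) \<epsilon> l))\<^sup>2 * mlmc_var V C c\<alpha> (3/4) \<epsilon>)
      \<le> exp (real l / 2) / (x\<^sup>2 * s0)"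
  proof (rule divide_left_mono)
    show "x\<^sup>2 * s0 \<le> (real (mlmc_M V C c\<alpha> (3/4) \<epsilon> l))\<^sup>2 * mlmc_var V C c\<alpha> (3/4) \<epsilon>"
      using M var x s0 by (intro mult_mono power_mono) auto
    show "0 < (real (mlmc_M V C c\<alpha> (3/4) \<epsilon> l))\<^sup>2 * mlmc_var V C c\<alpha> (3/4) \<epsilon> * (x\<^sup>2 * s0)"
      using M var x s0 by (intro mult_pos_pos) auto
  qed simp
  also have "\<dots> = 2 * \<epsilon>\<^sup>2 * (exp (real l / 2) * C l / V l) / (S * R)"
    unfolding x_def s0_def using \<epsilon> S V[of l] C[of l] R
    by (simp add: field_simps power2_eq_square power_mult_distrib power_divide)
  also have "\<dots> \<le> 2 * \<epsilon>\<^sup>2 * (C1 / v0 * exp ((1 + \<gamma>) * real L))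
                  / ((real L + 1) * sqrt (v0 * c1) * exp ((\<gamma> - 1/2) / 2 * real L) * R)"
    using ratio S_lower R \<epsilon> V[of l] C[of l] C1 v0 c1
    by (intro frac_le mult_left_mono mult_right_mono) auto
  also have "\<dots> = K * (\<epsilon>\<^sup>2 * exp ((5/4 + \<gamma>/2) * real L)) / (real L + 1)"
  proof -
    define E1 where "E1 = exp ((5/4 + \<gamma>/2) * real L)"
    define E2 where "E2 = exp ((\<gamma> - 1/2) / 2 * real L)"
    have split: "exp ((1 + \<gamma>) * real L) = E1 * E2"
      unfolding E1_def E2_def by (simp add: exp_add[symmetric] field_simps)
    have "0 < E2" "0 < sqrt (v0 * c1)" unfolding E2_def using v0 c1 by auto
    hence "2 * \<epsilon>\<^sup>2 * (C1 / v0 * (E1 * E2)) / (n * sqrt (v0 * c1) * E2 * R)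
        = 2 * C1 / (v0 * sqrt (v0 * c1) * R) * (\<epsilon>\<^sup>2 * E1) / n" if "0 < n" for n
      using that v0 R by (simp add: field_simps)
    thus ?thesis unfolding split K_def E1_def[symmetric] E2_def[symmetric] by simp
  qed
  also have "\<dots> \<le> K * (c\<alpha>\<^sup>2 * exp (3/2)) / (real L + 1)"
    using mlmc_tolerance_growth_bound[OF \<epsilon>(1,2) \<gamma>(2)] C1 v0 c1 R
    unfolding K_def L_def by (intro divide_right_mono mult_left_mono) auto
  finally show ?thesis unfolding K_def R_def L_def by (simp add: field_simps)
qed

lemma mlmc_L_tendsto_at_top:
  assumes "0 < c\<alpha>" "0 < \<alpha>"
  shows "filterlim (\<lambda>\<epsilon>. real (mlmc_L c\<alpha> \<alpha> \<epsilon>)) at_top (at_right 0)"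
proof (rule filterlim_at_top_mono[OF _ always_eventually[OF allI[OF mlmc_L_ge]]])
  have "filterlim (\<lambda>\<epsilon>. c\<alpha> * inverse \<epsilon>) at_top (at_right (0::real))"
    by (rule filterlim_tendsto_pos_mult_at_top[OF tendsto_const \<open>0 < c\<alpha>\<close> filterlim_inverse_at_top_right])
  hence "filterlim (\<lambda>\<epsilon>. ln (c\<alpha> * inverse \<epsilon>)) at_top (at_right (0::real))"
    by (rule filterlim_compose[OF ln_at_top])
  hence "filterlim (\<lambda>\<epsilon>. ln (c\<alpha> * inverse \<epsilon>) * inverse \<alpha>) at_top (at_right (0::real))"
    using \<open>0 < \<alpha>\<close> by (intro filterlim_at_top_mult_tendsto_pos[OF tendsto_const]) auto
  thus "filterlim (\<lambda>\<epsilon>. ln (c\<alpha> / \<epsilon>) / \<alpha>) at_top (at_right 0)"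
    by (simp add: divide_inverse)
qed

lemma mlmc_L_null_sequence:
  assumes "0 < c\<alpha>" "0 < \<alpha>" and es_pos: "\<forall>n. 0 < es n" and es_lim: "es \<longlonglongrightarrow> 0"
  shows "(\<lambda>n. K / (real (mlmc_L c\<alpha> \<alpha> (es n)) + 1)) \<longlonglongrightarrow> 0"
proof -
  have "filterlim es (at_right 0) sequentially"
    by (rule tendsto_imp_filterlim_at_right[OF es_lim]) (use es_pos in auto)
  hence "filterlim (\<lambda>n. real (mlmc_L c\<alpha> \<alpha> (es n))) at_top sequentially"
    by (rule filterlim_compose[OF mlmc_L_tendsto_at_top[OF assms(1,2)]])
  hence "filterlim (\<lambda>n. real (mlmc_L c\<alpha> \<alpha> (es n)) + 1) at_top sequentially"
    by (rule filterlim_at_top_mono) simp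
  thus ?thesis by (intro tendsto_divide_0[OF tendsto_const] filterlim_at_top_imp_at_infinity)
qed

section \<open>The example\<close>

lemma (in prob_space) integrable_indicator_event[simp]:
  "A \<in> events \<Longrightarrow> integrable M (indicator A :: 'a \<Rightarrow> real)"
  by (simp add: less_top[symmetric])

lemma (in prob_space) expectation_scaled_indicator:
  "A \<in> events \<Longrightarrow> expectation (\<lambda>\<omega>. a * indicator A \<omega>) = a * prob A"
  by simp

lemma sq_scaled_indicator_minus:
  fixes a m :: real
  shows "(a * indicator A \<omega> - m)\<^sup>2 = (a\<^sup>2 - 2 * a * m) * indicator A \<omega> + m\<^sup>2"
  by (cases "\<omega> \<in> A") (simp_all add: power2_eq_square algebra_simps)

lemma (in prob_space) variance_scaled_indicator:
  assumes "A \<in> events"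
  shows "variance (\<lambda>\<omega>. a * indicator A \<omega>) = a\<^sup>2 * prob A * (1 - prob A)"
proof -
  have "variance (\<lambda>\<omega>. a * indicator A \<omega>)
      = expectation (\<lambda>\<omega>. (a\<^sup>2 - 2 * a * (a * prob A)) * indicator A \<omega> + (a * prob A)\<^sup>2)"
    using assms by (simp add: sq_scaled_indicator_minus)
  also have "\<dots> = (a\<^sup>2 - 2 * a * (a * prob A)) * prob A + (a * prob A)\<^sup>2"
    using assms by (subst Bochner_Integration.integral_add) (auto simp: prob_space)
  finally show ?thesis by (simp add: power2_eq_square algebra_simps)
qed

lemma (in prob_space) standardized_sq_scaled_indicator:
  assumes "A \<in> events" "a \<noteq> 0" "0 < prob A" "prob A < 1"
  shows "(a * indicator A \<omega> - expectation (\<lambda>\<omega>. a * indicator A \<omega>))\<^sup>2 / variance (\<lambda>\<omega>. a * indicator A \<omega>)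
     = (if \<omega> \<in> A then (1 - prob A) / prob A else prob A / (1 - prob A))"
  by (subst variance_scaled_indicator[OF assms(1)], subst expectation_scaled_indicator[OF assms(1)])
     (use assms in \<open>simp add: field_simps power2_eq_square\<close>)

lemma (in prob_space) tail_expectation_two_point:
  assumes "A \<in> events"
  shows "expectation (\<lambda>\<omega>. (if \<omega> \<in> A then u else v) * indicator {\<omega>\<in>space M. (if \<omega> \<in> A then u else v) > x} \<omega>)
     = (if u > x then u * prob A else 0) + (if v > x then v * (1 - prob A) else 0)"
proof -
  define u' where "u' = (if u > x then u else 0)"
  define v' where "v' = (if v > x then v else 0)"
  have "expectation (\<lambda>\<omega>. (if \<omega> \<in> A then u else v) * indicator {\<omega>\<in>space M. (if \<omega> \<in> A then u else v) > x} \<omega>)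
      = expectation (\<lambda>\<omega>. (u' - v') * indicator A \<omega> + v')"
    by (rule Bochner_Integration.integral_cong[OF refl]) (auto simp: u'_def v'_def indicator_def)
  also have "\<dots> = (u' - v') * prob A + v'"
    using assms by (subst Bochner_Integration.integral_add) (auto simp: prob_space)
  also have "\<dots> = (if u > x then u * prob A else 0) + (if v > x then v * (1 - prob A) else 0)"
    by (simp add: u'_def v'_def algebra_simps)
  finally show ?thesis .
qed

definition geom_prob :: "nat \<Rightarrow> real" where
  "geom_prob k = (1 - exp (-1)) * exp (- real k)"

definition jump :: "nat \<Rightarrow> real" where
  "jump k = exp (real k / 4)"

lemma geom_prob_pos: "0 < geom_prob k"
  unfolding geom_prob_def by simp

lemma geom_prob_le: "geom_prob k \<le> 1 - exp (-1)"
  unfolding geom_prob_def by (simp add: mult_le_cancel_left1)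

lemma geom_prob_less_1: "geom_prob k < 1"
  using geom_prob_le[of k] exp_gt_zero[of "-1"] by linarith

lemma geom_prob_tendsto_0: "geom_prob \<longlonglongrightarrow> 0"
proof -
  have "geom_prob = (\<lambda>k. (1 - exp (-1)) * exp (-1::real) ^ k)"
    by (simp add: fun_eq_iff geom_prob_def exp_of_nat_mult[symmetric])
  moreover have "(\<lambda>k. (1 - exp (-1)) * exp (-1::real) ^ k) \<longlonglongrightarrow> (1 - exp (-1)) * 0"
    by (rule tendsto_mult[OF tendsto_const LIMSEQ_power_zero]) simp
  ultimately show ?thesis by simp
qed

lemma jump_pos: "0 < jump k"
  unfolding jump_def by simp

lemma jump_sq: "(jump k)\<^sup>2 = exp (real k / 2)"
  unfolding jump_def by (simp add: power2_eq_square exp_add[symmetric])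

lemma jump_times_geom_prob: "jump k * geom_prob k = (1 - exp (-1)) * exp (-3/4) ^ k"
  unfolding jump_def geom_prob_def
  by (simp add: exp_of_nat_mult[symmetric] exp_add[symmetric] algebra_simps)

lemma exdX_eq: "exdX \<Omega> l \<omega> = jump l * indicator (\<Omega> l) \<omega>"
  by (cases l) (simp_all add: exdX_def exXl_def jump_def)

lemma exXl_eq_sum_exdX: "exXl \<Omega> L \<omega> = (\<Sum>l=0..L. exdX \<Omega> l \<omega>)"
  by (simp add: exXl_def exdX_eq jump_def)

text \<open>Disjointness makes every series defining \<open>X\<close> a finite sum.\<close>
lemma exX_minus_exXl:
  assumes "disjoint_family \<Omega>"
  shows "exX \<Omega> \<omega> - exXl \<Omega> l \<omega> = (\<Sum>k. jump (k + Suc l) * indicator (\<Omega> (k + Suc l)) \<omega>)"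
    and "summable (\<lambda>k. jump (k + Suc l) * indicator (\<Omega> (k + Suc l)) \<omega>)"
proof -
  have finite_hits: "finite {k. \<omega> \<in> \<Omega> (k + m)}" for m
  proof (cases "\<exists>j. \<omega> \<in> \<Omega> j")
    case True
    then obtain j where j: "\<omega> \<in> \<Omega> j" by blast
    have "{k. \<omega> \<in> \<Omega> (k + m)} \<subseteq> {..j}"
    proof
      fix k assume "k \<in> {k. \<omega> \<in> \<Omega> (k + m)}"
      hence "k + m = j" using j assms unfolding disjoint_family_on_def by blast
      thus "k \<in> {..j}" by simp
    qed
    thus ?thesis by (rule finite_subset) simp
  next
    case False
    thus ?thesis by simp
  qed
  have summable: "summable (\<lambda>k. jump (k + m) * indicator (\<Omega> (k + m)) \<omega>)" for m
    by (rule summable_finite[OF finite_hits[of m]]) simp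
  then show "summable (\<lambda>k. jump (k + Suc l) * indicator (\<Omega> (k + Suc l)) \<omega>)" .
  have "exX \<Omega> \<omega> = (\<Sum>k. jump (k + Suc l) * indicator (\<Omega> (k + Suc l)) \<omega>)
                 + (\<Sum>k<Suc l. jump k * indicator (\<Omega> k) \<omega>)"
    unfolding exX_def jump_def[symmetric] using summable[of 0]
    by (intro suminf_split_initial_segment) (simp only: add_0_right)
  moreover have "exXl \<Omega> l \<omega> = (\<Sum>k<Suc l. jump k * indicator (\<Omega> k) \<omega>)"
    unfolding exXl_def jump_def[symmetric] by (simp add: atLeast0AtMost lessThan_Suc_atMost)
  ultimately show "exX \<Omega> \<omega> - exXl \<Omega> l \<omega> = (\<Sum>k. jump (k + Suc l) * indicator (\<Omega> (k + Suc l)) \<omega>)"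
    by simp
qed

locale geometric_events = prob_space M for M :: "'a measure" +
  fixes \<Omega> :: "nat \<Rightarrow> 'a set"
  assumes events_\<Omega>[measurable]: "\<And>k. \<Omega> k \<in> events"
    and disjoint_\<Omega>: "disjoint_family \<Omega>"
    and measure_\<Omega>: "\<And>k. measure M (\<Omega> k) = (1 - exp (-1)) * exp (- real k)"
begin

lemma prob_\<Omega>: "prob (\<Omega> k) = geom_prob k"
  using measure_\<Omega> by (simp add: geom_prob_def)

lemma exdX_measurable[measurable]: "exdX \<Omega> l \<in> borel_measurable M"
  unfolding exdX_eq[abs_def] by measurable

lemma integrable_exdX: "integrable M (exdX \<Omega> l)"
  unfolding exdX_eq[abs_def] by simp

lemma integrable_exdX_sq_dev: "integrable M (\<lambda>\<omega>. (exdX \<Omega> l \<omega> - m)\<^sup>2)"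
  unfolding exdX_eq sq_scaled_indicator_minus by simp

lemma expectation_exdX: "expectation (exdX \<Omega> l) = jump l * geom_prob l"
  unfolding exdX_eq[abs_def] by (simp add: prob_\<Omega>)

lemma variance_exdX: "variance (exdX \<Omega> l) = (1 - exp (-1)) * exp (- real l / 2) * (1 - geom_prob l)"
  unfolding exdX_eq[abs_def] variance_scaled_indicator[OF events_\<Omega>] prob_\<Omega> jump_sq
  by (simp add: geom_prob_def exp_add[symmetric] algebra_simps)

lemma variance_exdX_pos: "0 < variance (exdX \<Omega> l)"
  unfolding variance_exdX using geom_prob_less_1[of l] by simp

lemma variance_exdX_lower: "(1 - exp (-1)) * exp (-1) * exp (- real l / 2) \<le> variance (exdX \<Omega> l)"
proof -
  have "exp (-1) \<le> 1 - geom_prob l" using geom_prob_le[of l] by simp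
  thus ?thesis unfolding variance_exdX by (simp add: mult_left_mono mult.commute mult.left_commute)
qed

lemma variance_exdX_upper: "variance (exdX \<Omega> l) < exp (- real l / 2)"
proof -
  have "(1 - exp (-1)) * (1 - geom_prob l) \<le> 1 - exp (-1)"
    using geom_prob_pos[of l] by (simp add: mult_le_cancel_left1)
  hence "(1 - exp (-1)) * (1 - geom_prob l) < 1" using exp_gt_zero[of "-1"] by linarith
  thus ?thesis unfolding variance_exdX by (simp add: mult.commute mult.left_commute)
qed

lemma Theta_variance_exdX: "Theta (\<lambda>l. variance (exdX \<Omega> l)) (\<lambda>l. exp (- real l / 2))"
  unfolding Theta_def
proof (intro exI conjI allI)
  define v0 where "v0 = (1 - exp (-1)) * exp (-1::real)"
  have v0: "0 < v0" unfolding v0_def by simp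
  have "v0 \<le> exp (-1)" unfolding v0_def by (simp add: mult_le_cancel_right1)
  also have "exp (-1::real) < 1" by simp
  finally show "0 < v0 / 2" "v0 / 2 < 1" using v0 by auto
  fix l
  have "v0 / 2 * exp (- real l / 2) < v0 * exp (- real l / 2)" using v0 by simp
  also have "\<dots> \<le> variance (exdX \<Omega> l)" unfolding v0_def by (rule variance_exdX_lower)
  finally show "v0 / 2 * \<bar>exp (- real l / 2)\<bar> < \<bar>variance (exdX \<Omega> l)\<bar>"
    using variance_exdX_pos[of l] by simp
  show "\<bar>variance (exdX \<Omega> l)\<bar> < 1 * \<bar>exp (- real l / 2)\<bar>"
    using variance_exdX_pos[of l] variance_exdX_upper[of l] by simp
qed

lemma expectation_exX_minus_exXl:
  "expectation (\<lambda>\<omega>. exX \<Omega> \<omega> - exXl \<Omega> l \<omega>)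
     = (1 - exp (-1)) * exp (-3/4) / (1 - exp (-3/4)) * exp (- 3 * real l / 4)"
proof -
  define q :: real where "q = exp (-3/4)"
  have q: "0 < q" "q < 1" unfolding q_def by auto
  define g where "g = (\<lambda>k \<omega>. jump (k + Suc l) * indicator (\<Omega> (k + Suc l)) \<omega>)"
  have norm_g: "(\<lambda>\<omega>. norm (g k \<omega>)) = g k" for k
    by (auto simp: g_def abs_mult abs_of_pos[OF jump_pos] fun_eq_iff)
  have expectation_g: "expectation (g k) = (1 - exp (-1)) * q ^ (k + Suc l)" for k
    by (simp add: g_def prob_\<Omega> jump_times_geom_prob q_def)
  have "expectation (\<lambda>\<omega>. exX \<Omega> \<omega> - exXl \<Omega> l \<omega>) = expectation (\<lambda>\<omega>. \<Sum>k. g k \<omega>)"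
    by (simp add: exX_minus_exXl[OF disjoint_\<Omega>] g_def)
  also have "\<dots> = (\<Sum>k. expectation (g k))"
  proof (rule integral_suminf)
    show "AE \<omega> in M. summable (\<lambda>k. norm (g k \<omega>))"
      using exX_minus_exXl(2)[OF disjoint_\<Omega>, of l] by (simp add: g_def abs_mult abs_of_pos[OF jump_pos])
    show "summable (\<lambda>k. expectation (\<lambda>\<omega>. norm (g k \<omega>)))"
      unfolding norm_g expectation_g using q by (auto simp: power_add intro!: summable_mult summable_mult2 summable_geometric)
  qed (simp add: g_def)
  also have "\<dots> = (\<Sum>k. (1 - exp (-1)) * q ^ Suc l * q ^ k)"
    unfolding expectation_g by (simp add: power_add mult_ac)
  also have "\<dots> = (1 - exp (-1)) * q ^ Suc l / (1 - q)"
    using q by (subst suminf_mult) (auto simp: suminf_geometric summable_geometric)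
  also have "q ^ Suc l = q * exp (- 3 * real l / 4)"
    by (simp add: q_def exp_of_nat_mult[symmetric] mult_ac)
  finally show ?thesis by (simp add: q_def)
qed

lemma Theta_bias: "Theta (\<lambda>l. \<bar>expectation (\<lambda>\<omega>. exX \<Omega> \<omega> - exXl \<Omega> l \<omega>)\<bar>) (\<lambda>l. exp (- 3 * real l / 4))"
  unfolding Theta_def
proof (intro exI conjI allI)
  define K :: real where "K = (1 - exp (-1)) * exp (-3/4) / (1 - exp (-3/4))"
  have K: "0 < K" unfolding K_def by simp
  fix l
  have "\<bar>\<bar>expectation (\<lambda>\<omega>. exX \<Omega> \<omega> - exXl \<Omega> l \<omega>)\<bar>\<bar> = K * \<bar>exp (- 3 * real l / 4)\<bar>"
    unfolding expectation_exX_minus_exXl K_def[symmetric] using K by (simp add: abs_mult)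
  thus "K / 2 * \<bar>exp (- 3 * real l / 4)\<bar> < \<bar>\<bar>expectation (\<lambda>\<omega>. exX \<Omega> \<omega> - exXl \<Omega> l \<omega>)\<bar>\<bar>"
    and "\<bar>\<bar>expectation (\<lambda>\<omega>. exX \<Omega> \<omega> - exXl \<Omega> l \<omega>)\<bar>\<bar> < 2 * K * \<bar>exp (- 3 * real l / 4)\<bar>"
    using K by simp_all
  show "0 < K / 2" "K / 2 < 2 * K" using K by simp_all
qed

lemma standardized_sq_exdX:
  "(exdX \<Omega> l \<omega> - expectation (exdX \<Omega> l))\<^sup>2 / variance (exdX \<Omega> l)
     = (if \<omega> \<in> \<Omega> l then (1 - geom_prob l) / geom_prob l else geom_prob l / (1 - geom_prob l))"
proof -
  have "exdX \<Omega> l = (\<lambda>\<omega>. jump l * indicator (\<Omega> l) \<omega>)" by (simp add: exdX_eq fun_eq_iff)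
  hence "(exdX \<Omega> l \<omega> - expectation (exdX \<Omega> l))\<^sup>2 / variance (exdX \<Omega> l)
     = (if \<omega> \<in> \<Omega> l then (1 - prob (\<Omega> l)) / prob (\<Omega> l) else prob (\<Omega> l) / (1 - prob (\<Omega> l)))"
    using jump_pos[of l] geom_prob_pos[of l] geom_prob_less_1[of l]
    by (simp only:) (rule standardized_sq_scaled_indicator; simp add: prob_\<Omega>)
  thus ?thesis by (simp only: prob_\<Omega>)
qed

lemma tail_expectation_exdX:
  "expectation (\<lambda>\<omega>. ((exdX \<Omega> l \<omega> - expectation (exdX \<Omega> l))\<^sup>2 / variance (exdX \<Omega> l)) *
      indicator {\<omega>\<in>space M. (exdX \<Omega> l \<omega> - expectation (exdX \<Omega> l))\<^sup>2 / variance (exdX \<Omega> l) > x} \<omega>)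
   = (if (1 - geom_prob l) / geom_prob l > x then 1 - geom_prob l else 0)
     + (if geom_prob l / (1 - geom_prob l) > x then geom_prob l else 0)"
  unfolding standardized_sq_exdX tail_expectation_two_point[OF events_\<Omega>] prob_\<Omega>
  using geom_prob_pos[of l] geom_prob_less_1[of l] by simp

lemma tail_expectation_exdX_tendsto:
  assumes "1 < x"
  shows "(\<lambda>l. expectation (\<lambda>\<omega>. ((exdX \<Omega> l \<omega> - expectation (exdX \<Omega> l))\<^sup>2 / variance (exdX \<Omega> l)) *
      indicator {\<omega>\<in>space M. (exdX \<Omega> l \<omega> - expectation (exdX \<Omega> l))\<^sup>2 / variance (exdX \<Omega> l) > x} \<omega>))
    \<longlonglongrightarrow> 1"
proof -
  have "eventually (\<lambda>l. geom_prob l < 1 / (1 + x)) sequentially"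
    using assms by (intro order_tendstoD(2)[OF geom_prob_tendsto_0]) simp
  hence "eventually (\<lambda>l. 1 - geom_prob l = expectation (\<lambda>\<omega>.
      ((exdX \<Omega> l \<omega> - expectation (exdX \<Omega> l))\<^sup>2 / variance (exdX \<Omega> l)) *
      indicator {\<omega>\<in>space M. (exdX \<Omega> l \<omega> - expectation (exdX \<Omega> l))\<^sup>2 / variance (exdX \<Omega> l) > x} \<omega>)) sequentially"
  proof eventually_elim
    case (elim l)
    have p: "0 < geom_prob l" "geom_prob l < 1" using geom_prob_pos geom_prob_less_1 by auto
    have "x < (1 - geom_prob l) / geom_prob l" using elim p assms by (simp add: field_simps)
    moreover have "geom_prob l * 2 < 1"
    proof -
      have "geom_prob l * 2 < geom_prob l * (1 + x)" using p assms by simp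
      also have "\<dots> < 1" using elim p assms by (simp add: field_simps)
      finally show ?thesis .
    qed
    hence "geom_prob l / (1 - geom_prob l) < 1" using p by (simp add: field_simps)
    ultimately show ?case unfolding tail_expectation_exdX using assms by simp
  qed
  moreover have "(\<lambda>l. 1 - geom_prob l) \<longlonglongrightarrow> 1 - 0" by (intro tendsto_intros geom_prob_tendsto_0)
  ultimately show ?thesis by (simp add: Lim_transform_eventually)
qed

text \<open>For every truncation level \<open>K\<close> the tail expectation eventually equals \<open>1 - P(\<Omega>\<^sub>l) \<ge> e\<^sup>-\<^sup>1 > 1/3\<close>.\<close>
lemma not_unif_integrable_standardized_sq_exdX:
  "\<not> unif_integrable M (\<lambda>l \<omega>. (exdX \<Omega> l \<omega> - expectation (exdX \<Omega> l))\<^sup>2 / variance (exdX \<Omega> l))"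
proof
  have abs_eq: "\<bar>(exdX \<Omega> l \<omega> - expectation (exdX \<Omega> l))\<^sup>2 / variance (exdX \<Omega> l)\<bar>
      = (exdX \<Omega> l \<omega> - expectation (exdX \<Omega> l))\<^sup>2 / variance (exdX \<Omega> l)" for l \<omega>
    using variance_exdX_pos[of l] by simp
  assume "unif_integrable M (\<lambda>l \<omega>. (exdX \<Omega> l \<omega> - expectation (exdX \<Omega> l))\<^sup>2 / variance (exdX \<Omega> l))"
  hence "\<forall>e>0. \<exists>K. \<forall>l. expectation (\<lambda>\<omega>. ((exdX \<Omega> l \<omega> - expectation (exdX \<Omega> l))\<^sup>2 / variance (exdX \<Omega> l))
      * indicator {\<omega>\<in>space M. (exdX \<Omega> l \<omega> - expectation (exdX \<Omega> l))\<^sup>2 / variance (exdX \<Omega> l) > K} \<omega>) < e"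
    unfolding unif_integrable_def abs_eq by (rule conjunct2)
  moreover have "(0::real) < 1/3" by simp
  ultimately obtain K where K: "\<forall>l. expectation (\<lambda>\<omega>. ((exdX \<Omega> l \<omega> - expectation (exdX \<Omega> l))\<^sup>2 / variance (exdX \<Omega> l))
      * indicator {\<omega>\<in>space M. (exdX \<Omega> l \<omega> - expectation (exdX \<Omega> l))\<^sup>2 / variance (exdX \<Omega> l) > K} \<omega>) < 1/3"
    by blast
  have "eventually (\<lambda>l. geom_prob l < 1 / (1 + \<bar>K\<bar>)) sequentially"
    by (intro order_tendstoD(2)[OF geom_prob_tendsto_0]) (simp add: add_pos_nonneg)
  then obtain l where l: "geom_prob l < 1 / (1 + \<bar>K\<bar>)" by (auto dest: eventually_happens)
  have p: "0 < geom_prob l" "geom_prob l < 1" using geom_prob_pos geom_prob_less_1 by auto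
  have "\<bar>K\<bar> < (1 - geom_prob l) / geom_prob l" using l p by (simp add: field_simps)
  hence "K < (1 - geom_prob l) / geom_prob l" by linarith
  hence "1 - geom_prob l \<le> expectation (\<lambda>\<omega>. ((exdX \<Omega> l \<omega> - expectation (exdX \<Omega> l))\<^sup>2 / variance (exdX \<Omega> l))
      * indicator {\<omega>\<in>space M. (exdX \<Omega> l \<omega> - expectation (exdX \<Omega> l))\<^sup>2 / variance (exdX \<Omega> l) > K} \<omega>)"
    unfolding tail_expectation_exdX using p by simp
  moreover have "1/3 \<le> 1 - geom_prob l"
  proof -
    have "exp 1 \<le> (3::real)" by (rule exp_le)
    hence "1/3 \<le> exp (-1::real)" by (simp add: exp_minus field_simps)
    thus ?thesis using geom_prob_le[of l] by linarith
  qed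
  ultimately show False using K[rule_format, of l] by linarith
qed

end


section \<open>The MLMC estimator for the example\<close>

locale mlmc_example = geometric_events M \<Omega> for M :: "'a measure" and \<Omega> +
  fixes N :: "'b measure" and D :: "real \<Rightarrow> nat \<Rightarrow> nat \<Rightarrow> 'b \<Rightarrow> real"
    and C :: "nat \<Rightarrow> real" and c\<alpha> :: real
  assumes prob_space_N: "prob_space N" and C_pos: "\<And>l. 0 < C l" and c\<alpha>_pos: "0 < c\<alpha>"
    and indep_samples: "\<And>\<epsilon>. 0 < \<epsilon> \<Longrightarrow> prob_space.indep_vars N (\<lambda>_. borel) (\<lambda>(l, i). D \<epsilon> l i) UNIV"
    and distr_samples: "\<And>\<epsilon> l i. 0 < \<epsilon> \<Longrightarrow> distr N borel (D \<epsilon> l i) = distr M borel (exdX \<Omega> l)"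
begin

interpretation N: prob_space N by (rule prob_space_N)

abbreviation "V l \<equiv> variance (exdX \<Omega> l)"
abbreviation "levels \<epsilon> \<equiv> mlmc_L c\<alpha> (3/4) \<epsilon>"
abbreviation "samples \<epsilon> l \<equiv> mlmc_M V C c\<alpha> (3/4) \<epsilon> l"

definition sample_index :: "real \<Rightarrow> (nat \<times> nat) set" where
  "sample_index \<epsilon> = Sigma {0..levels \<epsilon>} (\<lambda>l. {1..samples \<epsilon> l})"

definition centered_sample :: "real \<Rightarrow> nat \<times> nat \<Rightarrow> 'b \<Rightarrow> real" where
  "centered_sample \<epsilon> j \<omega> = (D \<epsilon> (fst j) (snd j) \<omega> - jump (fst j) * geom_prob (fst j)) / real (samples \<epsilon> (fst j))"

lemma finite_sample_index: "finite (sample_index \<epsilon>)"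
  unfolding sample_index_def by auto

lemma sample_measurable: "0 < \<epsilon> \<Longrightarrow> D \<epsilon> l i \<in> borel_measurable N"
  using indep_samples[of \<epsilon>] unfolding N.indep_vars_def2 by auto

lemma
  fixes g :: "real \<Rightarrow> real"
  assumes \<epsilon>: "0 < \<epsilon>" and [measurable]: "g \<in> borel_measurable borel"
  shows expectation_sample: "N.expectation (\<lambda>\<omega>. g (D \<epsilon> l i \<omega>)) = expectation (\<lambda>\<omega>. g (exdX \<Omega> l \<omega>))"
    and integrable_sample_iff: "integrable N (\<lambda>\<omega>. g (D \<epsilon> l i \<omega>)) \<longleftrightarrow> integrable M (\<lambda>\<omega>. g (exdX \<Omega> l \<omega>))"
proof -
  note [measurable] = sample_measurable[OF \<epsilon>]
  have "N.expectation (\<lambda>\<omega>. g (D \<epsilon> l i \<omega>)) = integral\<^sup>L (distr N borel (D \<epsilon> l i)) g"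
    by (rule integral_distr[symmetric]) auto
  also have "\<dots> = integral\<^sup>L (distr M borel (exdX \<Omega> l)) g" by (simp add: distr_samples[OF \<epsilon>])
  also have "\<dots> = expectation (\<lambda>\<omega>. g (exdX \<Omega> l \<omega>))" by (rule integral_distr) auto
  finally show "N.expectation (\<lambda>\<omega>. g (D \<epsilon> l i \<omega>)) = expectation (\<lambda>\<omega>. g (exdX \<Omega> l \<omega>))" .
  have "integrable N (\<lambda>\<omega>. g (D \<epsilon> l i \<omega>)) \<longleftrightarrow> integrable (distr N borel (D \<epsilon> l i)) g"
    by (rule integrable_distr_eq[symmetric]) auto
  also have "\<dots> \<longleftrightarrow> integrable (distr M borel (exdX \<Omega> l)) g" by (simp add: distr_samples[OF \<epsilon>])
  also have "\<dots> \<longleftrightarrow> integrable M (\<lambda>\<omega>. g (exdX \<Omega> l \<omega>))" by (rule integrable_distr_eq) auto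
  finally show "integrable N (\<lambda>\<omega>. g (D \<epsilon> l i \<omega>)) \<longleftrightarrow> integrable M (\<lambda>\<omega>. g (exdX \<Omega> l \<omega>))" .
qed

lemma sample_deviation_bounded:
  assumes \<epsilon>: "0 < \<epsilon>"
  shows "AE \<omega> in N. \<bar>D \<epsilon> l i \<omega> - jump l * geom_prob l\<bar> \<le> jump l"
proof -
  note [measurable] = sample_measurable[OF \<epsilon>]
  have "0 \<le> jump l * geom_prob l" "jump l * geom_prob l \<le> jump l"
    using jump_pos[of l] geom_prob_pos[of l] geom_prob_less_1[of l] by (auto simp: mult_le_cancel_left1)
  hence "AE x in M. \<bar>exdX \<Omega> l x - jump l * geom_prob l\<bar> \<le> jump l"
    by (auto simp: exdX_eq indicator_def)
  hence "AE x in distr M borel (exdX \<Omega> l). \<bar>x - jump l * geom_prob l\<bar> \<le> jump l"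
    by (subst AE_distr_iff) auto
  hence "AE x in distr N borel (D \<epsilon> l i). \<bar>x - jump l * geom_prob l\<bar> \<le> jump l"
    by (subst distr_samples[OF \<epsilon>])
  thus ?thesis by (subst (asm) AE_distr_iff) auto
qed

lemma centered_sample:
  assumes \<epsilon>: "0 < \<epsilon>"
  shows centered_sample_measurable: "centered_sample \<epsilon> j \<in> borel_measurable N"
    and integrable_centered_sample_sq: "integrable N (\<lambda>\<omega>. (centered_sample \<epsilon> j \<omega>)\<^sup>2)"
    and expectation_centered_sample: "N.expectation (centered_sample \<epsilon> j) = 0"
    and expectation_centered_sample_sq:
      "N.expectation (\<lambda>\<omega>. (centered_sample \<epsilon> j \<omega>)\<^sup>2) = V (fst j) / (real (samples \<epsilon> (fst j)))\<^sup>2"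
    and centered_sample_bounded:
      "AE \<omega> in N. \<bar>centered_sample \<epsilon> j \<omega>\<bar> \<le> jump (fst j) / real (samples \<epsilon> (fst j))"
proof -
  obtain l i where j: "j = (l, i)" by force
  define m where "m = real (samples \<epsilon> l)"
  have m: "1 \<le> m" unfolding m_def using mlmc_M_ge_1 by simp
  note [measurable] = sample_measurable[OF \<epsilon>]
  have W: "centered_sample \<epsilon> j = (\<lambda>\<omega>. (D \<epsilon> l i \<omega> - jump l * geom_prob l) / m)"
    unfolding centered_sample_def j m_def by (simp add: fun_eq_iff)
  show "centered_sample \<epsilon> j \<in> borel_measurable N" unfolding W by measurable
  have "integrable N (\<lambda>\<omega>. D \<epsilon> l i \<omega>)"
    using integrable_sample_iff[OF \<epsilon>, of "\<lambda>x. x" l i] integrable_exdX by simp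
  moreover have "N.expectation (\<lambda>\<omega>. D \<epsilon> l i \<omega>) = jump l * geom_prob l"
    using expectation_sample[OF \<epsilon>, of "\<lambda>x. x" l i] expectation_exdX by simp
  ultimately show "N.expectation (centered_sample \<epsilon> j) = 0" unfolding W by (simp add: N.prob_space)
  have sq: "(\<lambda>\<omega>. (centered_sample \<epsilon> j \<omega>)\<^sup>2) = (\<lambda>\<omega>. (D \<epsilon> l i \<omega> - jump l * geom_prob l)\<^sup>2 / m\<^sup>2)"
    unfolding W by (simp add: power_divide)
  show "integrable N (\<lambda>\<omega>. (centered_sample \<epsilon> j \<omega>)\<^sup>2)"
    unfolding sq using integrable_sample_iff[OF \<epsilon>, of "\<lambda>x. (x - jump l * geom_prob l)\<^sup>2" l i]
    by (simp add: integrable_exdX_sq_dev)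
  show "N.expectation (\<lambda>\<omega>. (centered_sample \<epsilon> j \<omega>)\<^sup>2) = V (fst j) / (real (samples \<epsilon> (fst j)))\<^sup>2"
    unfolding sq using expectation_sample[OF \<epsilon>, of "\<lambda>x. (x - jump l * geom_prob l)\<^sup>2" l i]
    by (simp add: j m_def expectation_exdX)
  show "AE \<omega> in N. \<bar>centered_sample \<epsilon> j \<omega>\<bar> \<le> jump (fst j) / real (samples \<epsilon> (fst j))"
    unfolding W using sample_deviation_bounded[OF \<epsilon>, of l i]
    by eventually_elim (use m in \<open>simp add: j m_def abs_divide divide_right_mono\<close>)
qed

lemma indep_centered_samples:
  assumes \<epsilon>: "0 < \<epsilon>"
  shows "N.indep_vars (\<lambda>_. borel) (centered_sample \<epsilon>) (sample_index \<epsilon>)"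
proof -
  have "N.indep_vars (\<lambda>_. borel)
      (\<lambda>j \<omega>. (\<lambda>x. (x - jump (fst j) * geom_prob (fst j)) / real (samples \<epsilon> (fst j))) ((\<lambda>(l, i). D \<epsilon> l i) j \<omega>)) UNIV"
    by (rule N.indep_vars_compose2[OF indep_samples[OF \<epsilon>]]) auto
  hence "N.indep_vars (\<lambda>_. borel) (centered_sample \<epsilon>) UNIV"
    by (rule N.indep_vars_cong[THEN iffD1, rotated 3]) (auto simp: centered_sample_def fun_eq_iff split: prod.splits)
  thus ?thesis by (rule N.indep_vars_subset) simp
qed

lemma mlmc_est_minus_expectation:
  "mlmc_est V C c\<alpha> (3/4) \<epsilon> (D \<epsilon>) \<omega> - expectation (exXl \<Omega> (levels \<epsilon>))
     = (\<Sum>j\<in>sample_index \<epsilon>. centered_sample \<epsilon> j \<omega>)"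
proof -
  have "expectation (exXl \<Omega> (levels \<epsilon>)) = (\<Sum>l=0..levels \<epsilon>. jump l * geom_prob l)"
    unfolding exXl_eq_sum_exdX[abs_def]
    by (subst Bochner_Integration.integral_sum) (auto simp: integrable_exdX expectation_exdX)
  moreover have "(\<Sum>j\<in>sample_index \<epsilon>. centered_sample \<epsilon> j \<omega>)
      = (\<Sum>l=0..levels \<epsilon>. \<Sum>i=1..samples \<epsilon> l. (D \<epsilon> l i \<omega> - jump l * geom_prob l) / real (samples \<epsilon> l))"
    unfolding sample_index_def centered_sample_def by (subst sum.Sigma) (auto simp: split_beta)
  moreover have "\<dots> = (\<Sum>l=0..levels \<epsilon>. (1 / real (samples \<epsilon> l)) * (\<Sum>i=1..samples \<epsilon> l. D \<epsilon> l i \<omega>)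
                                          - jump l * geom_prob l)"
    using mlmc_M_ge_1[of V C c\<alpha> "3/4" \<epsilon>]
    by (intro sum.cong refl) (simp add: sum_divide_distrib[symmetric] sum_subtractf diff_divide_distrib
                                        Suc_le_eq)
  ultimately show ?thesis unfolding mlmc_est_def by (simp add: sum_subtractf)
qed

lemma mlmc_var_pos: "0 < mlmc_var V C c\<alpha> (3/4) \<epsilon>"
proof -
  have "0 < V 0 / real (samples \<epsilon> 0)"
    using variance_exdX_pos[of 0] mlmc_M_ge_1[of V C c\<alpha> "3/4" \<epsilon> 0] by simp
  also have "\<dots> \<le> mlmc_var V C c\<alpha> (3/4) \<epsilon>" unfolding mlmc_var_def
    by (rule member_le_sum) (auto intro!: divide_nonneg_nonneg less_imp_le[OF variance_exdX_pos])
  finally show ?thesis .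
qed

lemma sum_expectation_centered_sample_sq:
  assumes \<epsilon>: "0 < \<epsilon>"
  shows "(\<Sum>j\<in>sample_index \<epsilon>. N.expectation (\<lambda>\<omega>. (centered_sample \<epsilon> j \<omega>)\<^sup>2)) = mlmc_var V C c\<alpha> (3/4) \<epsilon>"
proof -
  have "(\<Sum>j\<in>sample_index \<epsilon>. N.expectation (\<lambda>\<omega>. (centered_sample \<epsilon> j \<omega>)\<^sup>2))
      = (\<Sum>l=0..levels \<epsilon>. \<Sum>i=1..samples \<epsilon> l. V l / (real (samples \<epsilon> l))\<^sup>2)"
    unfolding expectation_centered_sample_sq[OF \<epsilon>] sample_index_def
    by (subst sum.Sigma) (auto simp: split_beta)
  also have "\<dots> = mlmc_var V C c\<alpha> (3/4) \<epsilon>"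
    unfolding mlmc_var_def using mlmc_M_ge_1[of V C c\<alpha> "3/4" \<epsilon>]
    by (intro sum.cong refl) (simp add: power2_eq_square)
  finally show ?thesis .
qed

lemma variance_mlmc_est:
  assumes \<epsilon>: "0 < \<epsilon>"
  shows "N.variance (mlmc_est V C c\<alpha> (3/4) \<epsilon> (D \<epsilon>)) = mlmc_var V C c\<alpha> (3/4) \<epsilon>"
proof -
  define m where "m = expectation (exXl \<Omega> (levels \<epsilon>))"
  have est: "mlmc_est V C c\<alpha> (3/4) \<epsilon> (D \<epsilon>) = (\<lambda>\<omega>. m + (\<Sum>j\<in>sample_index \<epsilon>. centered_sample \<epsilon> j \<omega>))"
    using mlmc_est_minus_expectation[of \<epsilon>] by (simp add: fun_eq_iff m_def algebra_simps)
  have "integrable N (centered_sample \<epsilon> j)" for j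
    using centered_sample_measurable[OF \<epsilon>] integrable_centered_sample_sq[OF \<epsilon>]
    by (rule N.square_integrable_imp_integrable)
  hence "N.expectation (\<lambda>\<omega>. m + (\<Sum>j\<in>sample_index \<epsilon>. centered_sample \<epsilon> j \<omega>)) = m"
    using expectation_centered_sample[OF \<epsilon>] by (simp add: Bochner_Integration.integral_sum N.prob_space)
  hence "N.variance (mlmc_est V C c\<alpha> (3/4) \<epsilon> (D \<epsilon>))
      = (\<Sum>j\<in>sample_index \<epsilon>. N.expectation (\<lambda>\<omega>. (centered_sample \<epsilon> j \<omega>)\<^sup>2))"
    unfolding est using N.variance_sum_indep_centered(1)[OF finite_sample_index indep_centered_samples[OF \<epsilon>]
        integrable_centered_sample_sq[OF \<epsilon>] expectation_centered_sample[OF \<epsilon>]]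
    by simp
  also have "\<dots> = mlmc_var V C c\<alpha> (3/4) \<epsilon>" by (rule sum_expectation_centered_sample_sq[OF \<epsilon>])
  finally show ?thesis .
qed

lemma normalized_centered_sample_bounded:
  assumes c1: "0 < c1" and C_lower: "\<And>l. c1 * exp (\<gamma> * real l) \<le> C l"
    and C_upper: "\<And>l. C l \<le> C1 * exp (\<gamma> * real l)" and \<gamma>: "0 \<le> \<gamma>" "\<gamma> \<le> 1/2"
    and \<epsilon>: "0 < \<epsilon>" "\<epsilon> \<le> c\<alpha>" "\<epsilon>\<^sup>2 \<le> V 0" and j: "j \<in> sample_index \<epsilon>"
  defines "v0 \<equiv> (1 - exp (-1)) * exp (-1::real)"
  defines "K \<equiv> 2 * C1 * c\<alpha>\<^sup>2 * exp (3/2) / (v0 * sqrt (v0 * c1) * sqrt (V 0 * C 0))"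
  shows "AE \<omega> in N. \<bar>centered_sample \<epsilon> j \<omega> / sqrt (mlmc_var V C c\<alpha> (3/4) \<epsilon>)\<bar>
           \<le> sqrt (K / (real (levels \<epsilon>) + 1))"
proof -
  obtain l i where li: "j = (l, i)" by force
  have l: "l \<le> levels \<epsilon>" using j unfolding li sample_index_def by auto
  define m where "m = real (samples \<epsilon> l)"
  define s where "s = mlmc_var V C c\<alpha> (3/4) \<epsilon>"
  have m: "1 \<le> m" unfolding m_def by (rule mlmc_M_ge_1)
  have s: "0 < s" unfolding s_def by (rule mlmc_var_pos)
  have "(jump l / (m * sqrt s))\<^sup>2 = exp (real l / 2) / (m\<^sup>2 * s)"
    using s by (simp add: power_divide power_mult_distrib jump_sq)
  also have "\<dots> \<le> K / (real (levels \<epsilon>) + 1)"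
  proof -
    have v0: "0 < v0" unfolding v0_def by simp
    have V_lower: "v0 * exp (- (1/2) * real k) \<le> V k" for k
      using variance_exdX_lower[of k] by (simp add: v0_def)
    show ?thesis
      unfolding m_def s_def K_def
      by (rule mlmc_level_weight_bound[where V=V and C=C, OF v0 V_lower c1 C_lower C_upper \<gamma> c\<alpha>_pos \<epsilon> l])
  qed
  finally have weight: "jump l / (m * sqrt s) \<le> sqrt (K / (real (levels \<epsilon>) + 1))"
    by (rule real_le_rsqrt)
  show ?thesis
    using centered_sample_bounded[OF \<epsilon>(1), of j]
  proof eventually_elim
    case (elim \<omega>)
    have "\<bar>centered_sample \<epsilon> j \<omega> / sqrt s\<bar> = \<bar>centered_sample \<epsilon> j \<omega>\<bar> / sqrt s"
      using s by (simp add: abs_divide)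
    also have "\<dots> \<le> jump l / m / sqrt s"
      using elim s by (intro divide_right_mono) (simp_all add: li m_def)
    also have "\<dots> = jump l / (m * sqrt s)" by simp
    finally show ?case using weight by (simp add: s_def)
  qed
qed

theorem mlmc_est_clt:
  assumes \<gamma>: "0 < \<gamma>" "\<gamma> \<le> 1/2" and C_Theta: "Theta C (\<lambda>l. exp (\<gamma> * real l))"
  shows "conv_distr_at_0 N (\<lambda>\<epsilon> \<omega>.
           (mlmc_est V C c\<alpha> (3/4) \<epsilon> (D \<epsilon>) \<omega> - expectation (exXl \<Omega> (mlmc_L c\<alpha> (3/4) \<epsilon>)))
             / sqrt (N.variance (mlmc_est V C c\<alpha> (3/4) \<epsilon> (D \<epsilon>))))"
  unfolding conv_distr_at_0_def
proof (intro allI impI)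
  fix es :: "nat \<Rightarrow> real" assume es_pos: "\<forall>n. 0 < es n" and es_lim: "es \<longlonglongrightarrow> 0"
  obtain c1 C1 where c1: "0 < c1" and C_bounds: "\<And>l. c1 * exp (\<gamma> * real l) < C l \<and> C l < C1 * exp (\<gamma> * real l)"
    using C_Theta C_pos unfolding Theta_def by (metis abs_exp_cancel abs_of_pos)
  define v0 where "v0 = (1 - exp (-1)) * exp (-1::real)"
  define K where "K = 2 * C1 * c\<alpha>\<^sup>2 * exp (3/2) / (v0 * sqrt (v0 * c1) * sqrt (V 0 * C 0))"
  define Y where "Y n j \<omega> = centered_sample (es n) j \<omega> / sqrt (mlmc_var V C c\<alpha> (3/4) (es n))" for n j \<omega>
  define b where "b n = sqrt (K / (real (levels (es n)) + 1))" for n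
  have normalized_eq_sum: "(\<lambda>\<omega>. (mlmc_est V C c\<alpha> (3/4) (es n) (D (es n)) \<omega> - expectation (exXl \<Omega> (levels (es n))))
            / sqrt (N.variance (mlmc_est V C c\<alpha> (3/4) (es n) (D (es n)))))
        = (\<lambda>\<omega>. \<Sum>j\<in>sample_index (es n). Y n j \<omega>)" for n
    using mlmc_est_minus_expectation[of "es n"] variance_mlmc_est[of "es n"] es_pos
    by (simp add: fun_eq_iff Y_def sum_divide_distrib)
  have "eventually (\<lambda>n. es n < min (sqrt (V 0)) c\<alpha>) sequentially"
    using variance_exdX_pos[of 0] c\<alpha>_pos by (intro order_tendstoD(2)[OF es_lim]) simp
  hence small: "eventually (\<lambda>n. es n \<le> c\<alpha> \<and> (es n)\<^sup>2 \<le> V 0) sequentially"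
  proof eventually_elim
    case (elim n)
    have "(es n)\<^sup>2 \<le> (sqrt (V 0))\<^sup>2" using elim es_pos[rule_format, of n] by (intro power_mono) auto
    thus ?case using elim variance_exdX_pos[of 0] by simp
  qed
  have "weak_conv_m (\<lambda>n. distr N borel (\<lambda>\<omega>. \<Sum>j\<in>sample_index (es n). Y n j \<omega>)) std_normal_distribution"
  proof (rule clt_bounded_triangular_array[OF prob_space_N finite_sample_index])
    show "N.indep_vars (\<lambda>_. borel) (Y n) (sample_index (es n))" for n
      unfolding Y_def[abs_def] using es_pos
      by (intro N.indep_vars_compose2[OF indep_centered_samples, where Y="\<lambda>_ x. x / sqrt (mlmc_var V C c\<alpha> (3/4) (es n))", simplified]) auto
    show "integrable N (\<lambda>\<omega>. (Y n j \<omega>)\<^sup>2)" for n j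
      unfolding Y_def using integrable_centered_sample_sq es_pos by (simp add: power_divide)
    show "N.expectation (Y n j) = 0" for n j
      unfolding Y_def using expectation_centered_sample es_pos by simp
    show "(\<Sum>j\<in>sample_index (es n). N.expectation (\<lambda>\<omega>. (Y n j \<omega>)\<^sup>2)) = 1" for n
      unfolding Y_def using sum_expectation_centered_sample_sq[of "es n"] es_pos mlmc_var_pos[of "es n"]
      by (simp add: power_divide sum_divide_distrib[symmetric])
    show "eventually (\<lambda>n. \<forall>j\<in>sample_index (es n). AE \<omega> in N. \<bar>Y n j \<omega>\<bar> \<le> b n) sequentially"
      using small
    proof eventually_elim
      case (elim n)
      show ?case
        unfolding Y_def b_def K_def v0_def
        by (intro ballI normalized_centered_sample_bounded[OF c1]) (use C_bounds \<gamma> es_pos elim in \<open>auto intro: less_imp_le\<close>)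
    qed
    have "(\<lambda>n. K / (real (levels (es n)) + 1)) \<longlonglongrightarrow> 0"
      by (rule mlmc_L_null_sequence[OF c\<alpha>_pos _ es_pos es_lim]) simp
    thus "b \<longlonglongrightarrow> 0" unfolding b_def using tendsto_real_sqrt by fastforce
  qed
  thus "weak_conv_m (\<lambda>n. distr N borel ((\<lambda>\<epsilon> \<omega>. (mlmc_est V C c\<alpha> (3/4) \<epsilon> (D \<epsilon>) \<omega>
            - expectation (exXl \<Omega> (mlmc_L c\<alpha> (3/4) \<epsilon>)))
            / sqrt (N.variance (mlmc_est V C c\<alpha> (3/4) \<epsilon> (D \<epsilon>)))) (es n))) std_normal_distribution"
    by (simp only: normalized_eq_sum)
qed

end


lemma (in geometric_events) mlmc_est_clt_for_costs:
  fixes N :: "'b measure" and D :: "real \<Rightarrow> nat \<Rightarrow> nat \<Rightarrow> 'b \<Rightarrow> real"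
  assumes "0 < \<gamma>" "\<gamma> \<le> 1/2" "\<forall>l. C l > 0" "Theta C (\<lambda>l. exp (\<gamma> * real l))" "0 < c\<alpha>" "prob_space N"
    and "\<forall>\<epsilon>>0. prob_space.indep_vars N (\<lambda>_. borel) (\<lambda>(l, i). D \<epsilon> l i) UNIV
                \<and> (\<forall>l i. distr N borel (D \<epsilon> l i) = distr M borel (exdX \<Omega> l))"
  shows "conv_distr_at_0 N (\<lambda>\<epsilon> \<omega>.
           (mlmc_est (\<lambda>l. variance (exdX \<Omega> l)) C c\<alpha> (3/4) \<epsilon> (D \<epsilon>) \<omega>
              - expectation (exXl \<Omega> (mlmc_L c\<alpha> (3/4) \<epsilon>)))
           / sqrt (prob_space.variance N (mlmc_est (\<lambda>l. variance (exdX \<Omega> l)) C c\<alpha> (3/4) \<epsilon> (D \<epsilon>))))"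
proof -
  interpret mlmc_example M \<Omega> N D C c\<alpha>
    using assms by (intro mlmc_example.intro mlmc_example_axioms.intro geometric_events_axioms) auto
  show ?thesis using assms(1,2,4) by (rule mlmc_est_clt)
qed

theorem mainTheorem7:
  fixes M :: "'a measure" and \<Omega> :: "nat \<Rightarrow> 'a set"
  assumes "prob_space M"
    and "\<And>k. \<Omega> k \<in> sets M"
    and "disjoint_family \<Omega>"
    and "\<And>k. measure M (\<Omega> k) = (1 - exp (-1)) * exp (- real k)"
  shows
    "Theta (\<lambda>l. \<bar>prob_space.expectation M (\<lambda>\<omega>. exX \<Omega> \<omega> - exXl \<Omega> l \<omega>)\<bar>)
           (\<lambda>l. exp (- 3 * real l / 4))
   \<and> Theta (\<lambda>l. prob_space.variance M (exdX \<Omega> l)) (\<lambda>l. exp (- real l / 2))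
   \<and> (\<forall>x>1. (\<lambda>l. prob_space.expectation M (\<lambda>\<omega>.
          ((exdX \<Omega> l \<omega> - prob_space.expectation M (exdX \<Omega> l))\<^sup>2 / prob_space.variance M (exdX \<Omega> l)) *
          indicator {\<omega>\<in>space M. (exdX \<Omega> l \<omega> - prob_space.expectation M (exdX \<Omega> l))\<^sup>2
                                   / prob_space.variance M (exdX \<Omega> l) > x} \<omega>)) \<longlonglongrightarrow> 1)
   \<and> \<not> unif_integrable M (\<lambda>l \<omega>. (exdX \<Omega> l \<omega> - prob_space.expectation M (exdX \<Omega> l))\<^sup>2
                                   / prob_space.variance M (exdX \<Omega> l))
   \<and> (\<forall>(\<gamma>::real) (C::nat \<Rightarrow> real) (c\<alpha>::real) (N::'b measure) (D::real \<Rightarrow> nat \<Rightarrow> nat \<Rightarrow> 'b \<Rightarrow> real).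
        0 < \<gamma> \<longrightarrow> \<gamma> \<le> 1/2 \<longrightarrow> (\<forall>l. C l > 0) \<longrightarrow> Theta C (\<lambda>l. exp (\<gamma> * real l)) \<longrightarrow>
        0 < c\<alpha> \<longrightarrow>
        (\<forall>l. \<bar>prob_space.expectation M (\<lambda>\<omega>. exX \<Omega> \<omega> - exXl \<Omega> l \<omega>)\<bar> \<le> c\<alpha> * exp (- 3/4 * real l)) \<longrightarrow>
        prob_space N \<longrightarrow>
        (\<forall>\<epsilon>>0. prob_space.indep_vars N (\<lambda>_. borel) (\<lambda>(l, i). D \<epsilon> l i) UNIV
                \<and> (\<forall>l i. distr N borel (D \<epsilon> l i) = distr M borel (exdX \<Omega> l))) \<longrightarrow>
        conv_distr_at_0 N (\<lambda>\<epsilon> \<omega>.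
          (mlmc_est (\<lambda>l. prob_space.variance M (exdX \<Omega> l)) C c\<alpha> (3/4) \<epsilon> (D \<epsilon>) \<omega>
             - prob_space.expectation M (exXl \<Omega> (mlmc_L c\<alpha> (3/4) \<epsilon>)))
          / sqrt (prob_space.variance N
                   (mlmc_est (\<lambda>l. prob_space.variance M (exdX \<Omega> l)) C c\<alpha> (3/4) \<epsilon> (D \<epsilon>)))))"
proof -
  interpret geometric_events M \<Omega>
    by (intro geometric_events.intro geometric_events_axioms.intro assms)
  show ?thesis
    using Theta_bias Theta_variance_exdX tail_expectation_exdX_tendsto
      not_unif_integrable_standardized_sq_exdX mlmc_est_clt_for_costs
    by blast
qed

end
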